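(* Let $A,B$ be Hermitian operators on $\mathbb{C}^N$ having $N_A$ and $N_B$ distinct eigenvalues, respectively. If the KD distribution of $(A,B)$ distinguishes all states (i.e. $\rho\mapsto K^{A,B}_\rho$ is injective on density operators on $\mathbb{C}^N$), then $2N^2-1\le(2N_A-1)(2N_B-1)$.
   Context: A density operator is a positive semidefinite trace-one operator. Kirkwood–Dirac (KD) distribution: for Hermitian operators $A_1,\dots,A_n$ on $\mathbb{C}^N$ and a density operator $\rho$, define $\#^{K}_{A_1,\dots,A_n}(x)=(2\pi)^{-n}\int_{\mathbb{R}^n} e^{-is_1A_1}\cdots e^{-is_nA_n}\,e^{i s\cdot x}\,d^ns$ (inverse Fourier transform in the distributional sense), and $K^{A_1,\dots,A_n}_\rho(x)=\mathrm{Tr}[\#^{K}_{A_1,\dots,A_n}(x)\,\rho]$. *)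

theory Defs
  imports "Jordan_Normal_Form.Jordan_Normal_Form" "Jordan_Normal_Form.Schur_Decomposition"
begin

definition hermitian_op :: "nat \<Rightarrow> complex mat \<Rightarrow> bool" where
  "hermitian_op N A \<longleftrightarrow> A \<in> carrier_mat N N \<and> mat_adjoint A = A"

definition mtrace :: "complex mat \<Rightarrow> complex" where
  "mtrace M = (\<Sum>i<dim_row M. M $$ (i, i))"

definition psd_op :: "nat \<Rightarrow> complex mat \<Rightarrow> bool" where
  "psd_op N M \<longleftrightarrow> M \<in> carrier_mat N N \<and>
     (\<forall>v \<in> carrier_vec N. (M *\<^sub>v v) \<bullet>c v \<in> \<real> \<and> 0 \<le> Re ((M *\<^sub>v v) \<bullet>c v))"

definition density_op :: "nat \<Rightarrow> complex mat \<Rightarrow> bool" where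
  "density_op N \<rho> \<longleftrightarrow> psd_op N \<rho> \<and> mtrace \<rho> = 1"

text \<open>Orthogonal (spectral) projector of A onto its eigenspace for the value x
  (the zero matrix if x is not an eigenvalue).\<close>

definition eig_proj :: "nat \<Rightarrow> complex mat \<Rightarrow> complex \<Rightarrow> complex mat" where
  "eig_proj N A x = (THE P. P \<in> carrier_mat N N \<and> mat_adjoint P = P \<and> P * P = P \<and>
      {v \<in> carrier_vec N. P *\<^sub>v v = v} = {v \<in> carrier_vec N. A *\<^sub>v v = x \<cdot>\<^sub>v v})"

text \<open>For Hermitian A = sum a_i P_i,
  B = sum b_j Q_j the distributional inverse Fourier transform of
  exp(-i s1 A) exp(-i s2 B) equals sum_{i,j} delta(x1 - a_i) delta(x2 - b_j) P_i Q_j,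
  so K_rho is the (finitely supported) sum of point masses with weights Tr[P_i Q_j rho].
  We represent it by its weight function on R^2.\<close>

definition KD :: "nat \<Rightarrow> complex mat \<Rightarrow> complex mat \<Rightarrow> complex mat \<Rightarrow> real \<times> real \<Rightarrow> complex" where
  "KD N A B \<rho> = (\<lambda>(x, y). mtrace (eig_proj N A (of_real x) * eig_proj N B (of_real y) * \<rho>))"

definition num_eigenvalues :: "complex mat \<Rightarrow> nat" where
  "num_eigenvalues A = card {x. eigenvalue A x}"

end

(* The Kirkwood-Dirac distribution of (A, B) is supported on the N_A N_B pairs (a, b) of
   eigenvalues, and H |-> K_H is real-linear.  Injectivity on density operators propagates to
   all Hermitian H: the total mass of K_H is Tr H, and a traceless Hermitian H with K_H = 0 would
   make the states I/N and I/N + t H indistinguishable for small t > 0.  So the distributions of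
   a real basis of the N^2 Hermitian matrices are N^2 real-independent complex functions on the
   grid of eigenvalue pairs.  Their row sums Tr (P_a H) and column sums Tr (Q_b H) are real;
   functions with imaginary row or column sums therefore add N_A + N_B - 1 independent
   directions (rows and columns share the total).  Inside the 2 N_A N_B dimensional real space
   of functions on the grid this gives N^2 + N_A + N_B - 1 <= 2 N_A N_B, which is the claim. *)

theory Submission
  imports Defs "HOL-Library.Function_Algebras"
begin

section \<open>Hermitian matrices\<close>

lemma mat_adjoint_dims [simp]:
  "dim_row (mat_adjoint A) = dim_col A" "dim_col (mat_adjoint A) = dim_row A"
  unfolding mat_adjoint_def by auto

lemma index_mat_adjoint [simp]:
  "i < dim_col A \<Longrightarrow> j < dim_row A \<Longrightarrow> mat_adjoint A $$ (i, j) = cnj (A $$ (j, i))"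
  unfolding mat_adjoint_def by (simp add: mat_of_rows_index)

lemma hermitian_op_carrier: "hermitian_op N A \<Longrightarrow> A \<in> carrier_mat N N"
  unfolding hermitian_op_def by auto

lemma hermitian_op_cnj:
  assumes "hermitian_op N A" "i < N" "j < N"
  shows "cnj (A $$ (j, i)) = A $$ (i, j)"
proof -
  have "A $$ (i, j) = mat_adjoint A $$ (i, j)"
    using assms(1) unfolding hermitian_op_def by simp
  then show ?thesis
    using assms hermitian_op_carrier[OF assms(1)] by simp
qed

lemma hermitian_opI:
  assumes "A \<in> carrier_mat N N" "\<And>i j. i < N \<Longrightarrow> j < N \<Longrightarrow> A $$ (i, j) = cnj (A $$ (j, i))"
  shows "hermitian_op N A"
  unfolding hermitian_op_def
proof (intro conjI assms(1))
  show "mat_adjoint A = A"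
  proof (rule eq_matI)
    fix i j assume "i < dim_row A" "j < dim_col A"
    then show "mat_adjoint A $$ (i, j) = A $$ (i, j)"
      using assms(1) assms(2)[of j i] by simp
  qed (use assms(1) in auto)
qed

lemma cscalar_prod_sum: "v \<bullet>c w = (\<Sum>i<dim_vec w. v $ i * cnj (w $ i))"
  unfolding scalar_prod_def by (auto intro: sum.cong simp: lessThan_atLeast0)

lemma cscalar_prod_sum_carrier: "w \<in> carrier_vec n \<Longrightarrow> v \<bullet>c w = (\<Sum>i<n. v $ i * cnj (w $ i))"
  by (simp add: cscalar_prod_sum)

lemma cscalar_prod_smult_left:
  "w \<in> carrier_vec n \<Longrightarrow> v \<in> carrier_vec n \<Longrightarrow> (c \<cdot>\<^sub>v v) \<bullet>c w = c * (v \<bullet>c w)"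
  by (simp add: cscalar_prod_sum_carrier sum_distrib_left mult_ac)

lemma cscalar_prod_smult_right:
  "w \<in> carrier_vec n \<Longrightarrow> v \<in> carrier_vec n \<Longrightarrow> v \<bullet>c (c \<cdot>\<^sub>v w) = cnj c * (v \<bullet>c w)"
  by (simp add: cscalar_prod_sum_carrier sum_distrib_left mult_ac)

lemma cscalar_prod_minus_left:
  fixes u v w :: "complex vec"
  shows "w \<in> carrier_vec n \<Longrightarrow> u \<in> carrier_vec n \<Longrightarrow> v \<in> carrier_vec n \<Longrightarrow>
    (u - v) \<bullet>c w = u \<bullet>c w - v \<bullet>c w"
  by (simp add: cscalar_prod_sum sum_subtractf algebra_simps)

lemma hermitian_op_cscalar_prod:
  assumes h: "hermitian_op N A" and u: "u \<in> carrier_vec N" and w: "w \<in> carrier_vec N"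
  shows "(A *\<^sub>v u) \<bullet>c w = u \<bullet>c (A *\<^sub>v w)"
proof -
  have c: "A \<in> carrier_mat N N" using h hermitian_op_carrier by auto
  have "(A *\<^sub>v u) \<bullet>c w = (\<Sum>i<N. \<Sum>k<N. A $$ (i, k) * u $ k * cnj (w $ i))"
    using c u w by (simp add: cscalar_prod_sum_carrier scalar_prod_def lessThan_atLeast0 sum_distrib_right)
  also have "\<dots> = (\<Sum>k<N. \<Sum>i<N. A $$ (i, k) * u $ k * cnj (w $ i))"
    by (rule sum.swap)
  also have "\<dots> = (\<Sum>k<N. u $ k * cnj (\<Sum>i<N. A $$ (k, i) * w $ i))"
    by (auto intro!: sum.cong simp: sum_distrib_left hermitian_op_cnj[OF h] mult_ac)
  also have "\<dots> = u \<bullet>c (A *\<^sub>v w)"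
    using c u w by (simp add: cscalar_prod_sum_carrier scalar_prod_def lessThan_atLeast0)
  finally show ?thesis .
qed

lemma hermitian_op_eigenvalue_real:
  assumes h: "hermitian_op N A" and v: "v \<in> carrier_vec N" "v \<noteq> 0\<^sub>v N"
    and e: "A *\<^sub>v v = x \<cdot>\<^sub>v v"
  shows "cnj x = x"
proof -
  have "x * (v \<bullet>c v) = (A *\<^sub>v v) \<bullet>c v" using e v by (simp add: cscalar_prod_smult_left)
  also have "\<dots> = v \<bullet>c (A *\<^sub>v v)" using hermitian_op_cscalar_prod[OF h v(1) v(1)] .
  also have "\<dots> = cnj x * (v \<bullet>c v)" using e v by (simp add: cscalar_prod_smult_right)
  finally show ?thesis using v by simp
qed

lemma hermitian_op_eigenvectors_orthogonal:
  assumes h: "hermitian_op N A" and u: "u \<in> carrier_vec N" and w: "w \<in> carrier_vec N"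
    and eu: "A *\<^sub>v u = a \<cdot>\<^sub>v u" and ew: "A *\<^sub>v w = b \<cdot>\<^sub>v w" and b: "cnj b = b" and ab: "a \<noteq> b"
  shows "u \<bullet>c w = 0"
proof -
  have "a * (u \<bullet>c w) = (A *\<^sub>v u) \<bullet>c w" using eu u w by (simp add: cscalar_prod_smult_left)
  also have "\<dots> = u \<bullet>c (A *\<^sub>v w)" using hermitian_op_cscalar_prod[OF h u w] .
  also have "\<dots> = b * (u \<bullet>c w)" using ew u w b by (simp add: cscalar_prod_smult_right)
  finally show ?thesis using ab by simp
qed

lemma hermitian_op_spectrum:
  assumes h: "hermitian_op N A"
  shows "finite {x. eigenvalue A x}" and "eigenvalue A a \<Longrightarrow> cnj a = a"
proof -
  have A: "A \<in> carrier_mat N N" using h hermitian_op_carrier by auto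
  have "char_poly A \<noteq> 0" using degree_monic_char_poly[OF A] by auto
  then show "finite {x. eigenvalue A x}"
    using poly_roots_finite eigenvalue_root_char_poly[OF A] by simp
  assume "eigenvalue A a"
  then obtain v where "v \<in> carrier_vec N" "v \<noteq> 0\<^sub>v N" "A *\<^sub>v v = a \<cdot>\<^sub>v v"
    using A unfolding eigenvalue_def eigenvector_def by auto
  then show "cnj a = a" using hermitian_op_eigenvalue_real[OF h] by blast
qed

section \<open>Spectral decomposition of Hermitian matrices\<close>

definition vec_sum :: "nat \<Rightarrow> 'b set \<Rightarrow> ('b \<Rightarrow> complex vec) \<Rightarrow> complex vec" where
  "vec_sum n S g = vec n (\<lambda>i. \<Sum>a\<in>S. g a $ i)"

lemma vec_sum_carrier [simp]: "vec_sum n S g \<in> carrier_vec n"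
  and dim_vec_sum [simp]: "dim_vec (vec_sum n S g) = n"
  unfolding vec_sum_def by auto

lemma index_vec_sum [simp]: "i < n \<Longrightarrow> vec_sum n S g $ i = (\<Sum>a\<in>S. g a $ i)"
  unfolding vec_sum_def by auto

lemma vec_sum_cong: "(\<And>a. a \<in> S \<Longrightarrow> g a = h a) \<Longrightarrow> vec_sum n S g = vec_sum n S h"
  unfolding vec_sum_def by (auto intro!: eq_vecI sum.cong)

lemma mult_mat_vec_sum:
  assumes M: "M \<in> carrier_mat n n" and g: "\<And>a. a \<in> S \<Longrightarrow> g a \<in> carrier_vec n"
  shows "M *\<^sub>v vec_sum n S g = vec_sum n S (\<lambda>a. M *\<^sub>v g a)"
proof (rule eq_vecI)
  fix i assume "i < dim_vec (vec_sum n S (\<lambda>a. M *\<^sub>v g a))"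
  then have i: "i < n" by simp
  have "(M *\<^sub>v vec_sum n S g) $ i = (\<Sum>k<n. M $$ (i, k) * (\<Sum>a\<in>S. g a $ k))"
    using M i by (simp add: scalar_prod_def lessThan_atLeast0)
  also have "\<dots> = (\<Sum>a\<in>S. \<Sum>k<n. M $$ (i, k) * g a $ k)"
    by (simp add: sum_distrib_left sum.swap[of _ S])
  also have "\<dots> = vec_sum n S (\<lambda>a. M *\<^sub>v g a) $ i"
  proof -
    have "dim_vec (g a) = n" if "a \<in> S" for a using g[OF that] by auto
    then show ?thesis
      using i M by (auto intro!: sum.cong simp: scalar_prod_def lessThan_atLeast0)
  qed
  finally show "(M *\<^sub>v vec_sum n S g) $ i = vec_sum n S (\<lambda>a. M *\<^sub>v g a) $ i" .
qed (use M in auto)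

lemma vec_sum_cscalar_prod_left:
  assumes w: "w \<in> carrier_vec n"
  shows "vec_sum n S g \<bullet>c w = (\<Sum>a\<in>S. g a \<bullet>c w)"
proof -
  have "vec_sum n S g \<bullet>c w = (\<Sum>a\<in>S. \<Sum>i<n. g a $ i * cnj (w $ i))"
    using w by (simp add: cscalar_prod_sum_carrier sum_distrib_right sum.swap[of _ S])
  also have "\<dots> = (\<Sum>a\<in>S. g a \<bullet>c w)"
    using w by (simp add: cscalar_prod_sum_carrier)
  finally show ?thesis .
qed

lemma vec_sum_cscalar_prod_right:
  assumes g: "\<And>a. a \<in> S \<Longrightarrow> g a \<in> carrier_vec n"
  shows "v \<bullet>c vec_sum n S g = (\<Sum>a\<in>S. v \<bullet>c g a)"
proof -
  have "v \<bullet>c vec_sum n S g = (\<Sum>a\<in>S. \<Sum>i<n. v $ i * cnj (g a $ i))"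
    by (simp add: cscalar_prod_sum cnj_sum sum_distrib_left sum.swap[of _ S])
  also have "\<dots> = (\<Sum>a\<in>S. v \<bullet>c g a)"
    by (rule sum.cong[OF refl]) (simp add: cscalar_prod_sum_carrier[OF g])
  finally show ?thesis .
qed

definition eigen_family :: "nat \<Rightarrow> complex mat \<Rightarrow> complex set \<Rightarrow> (complex \<Rightarrow> complex vec) \<Rightarrow> bool" where
  "eigen_family N A S g \<longleftrightarrow> (\<forall>a\<in>S. g a \<in> carrier_vec N \<and> A *\<^sub>v g a = a \<cdot>\<^sub>v g a)"

definition eigen_decomposable :: "nat \<Rightarrow> complex mat \<Rightarrow> complex set \<Rightarrow> complex vec \<Rightarrow> bool" where
  "eigen_decomposable N A S v \<longleftrightarrow> (\<exists>g. eigen_family N A S g \<and> v = vec_sum N S g)"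

lemma eigen_decomposable_zero: "A \<in> carrier_mat N N \<Longrightarrow> eigen_decomposable N A S (0\<^sub>v N)"
  unfolding eigen_decomposable_def eigen_family_def
  by (rule exI[of _ "\<lambda>_. 0\<^sub>v N"]) (auto intro!: eq_vecI)

lemma eigenvector_orthogonal_shift_range:
  assumes h: "hermitian_op N A" and c: "cnj c = c" and u: "u \<in> carrier_vec N"
    and w: "A *\<^sub>v w = c \<cdot>\<^sub>v w" and range: "A *\<^sub>v u - c \<cdot>\<^sub>v u = w"
  shows "w = 0\<^sub>v N"
proof -
  have A: "A \<in> carrier_mat N N" using h hermitian_op_carrier by auto
  then have wc: "w \<in> carrier_vec N" using range u by auto
  have "w \<bullet>c w = u \<bullet>c (A *\<^sub>v w) - c * (u \<bullet>c w)"
    unfolding range[symmetric] using A u wc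
    by (simp add: cscalar_prod_minus_left[of _ N] cscalar_prod_smult_left[of _ N]
        hermitian_op_cscalar_prod[OF h])
  also have "\<dots> = 0" using w cscalar_prod_smult_right[OF wc u] c by simp
  finally show ?thesis using wc by simp
qed

lemma eigen_family_shift_inverse:
  assumes A: "A \<in> carrier_mat N N" and fam: "eigen_family N A S g" and c: "c \<notin> S"
  defines "l \<equiv> vec_sum N S (\<lambda>a. (1 / (a - c)) \<cdot>\<^sub>v g a)"
  shows "A *\<^sub>v l - c \<cdot>\<^sub>v l = vec_sum N S g"
proof (rule eq_vecI)
  fix i assume "i < dim_vec (vec_sum N S g)"
  then have i: "i < N" by simp
  have gc: "\<And>a. a \<in> S \<Longrightarrow> g a \<in> carrier_vec N" and ge: "\<And>a. a \<in> S \<Longrightarrow> A *\<^sub>v g a = a \<cdot>\<^sub>v g a"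
    using fam unfolding eigen_family_def by auto
  then have gdim: "\<And>a. a \<in> S \<Longrightarrow> dim_vec (g a) = N" by auto
  have "A *\<^sub>v l = vec_sum N S (\<lambda>a. (a / (a - c)) \<cdot>\<^sub>v g a)"
    unfolding l_def using gc ge
    by (subst mult_mat_vec_sum[OF A]) (auto simp: mult_mat_vec[OF A] intro!: vec_sum_cong)
  then have "(A *\<^sub>v l - c \<cdot>\<^sub>v l) $ i = (\<Sum>a\<in>S. (a - c) * (1 / (a - c) * g a $ i))"
    using i A gdim
    by (simp add: l_def sum_distrib_left sum_subtractf[symmetric] left_diff_distrib
        diff_divide_distrib)
  also have "\<dots> = (\<Sum>a\<in>S. g a $ i)"
    using c by (intro sum.cong) auto
  finally show "(A *\<^sub>v l - c \<cdot>\<^sub>v l) $ i = vec_sum N S g $ i" using i by simp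
qed (use A in \<open>simp add: l_def\<close>)

text \<open>If \<open>(A - c) v = \<Sum>\<^sub>a g\<^sub>a\<close>, then \<open>u = v - \<Sum>\<^sub>a\<^sub>\<noteq>\<^sub>c g\<^sub>a / (a - c)\<close> satisfies
  \<open>(A - c) u = g\<^sub>c\<close>, which forces \<open>g\<^sub>c = 0\<close>; so \<open>u\<close> is a \<open>c\<close>-eigenvector.\<close>

lemma eigen_decomposable_shift:
  assumes h: "hermitian_op N A" and S: "finite S" and real: "\<And>a. a \<in> S \<Longrightarrow> cnj a = a"
    and cS: "c \<in> S" and v: "v \<in> carrier_vec N"
    and dec: "eigen_decomposable N A S (A *\<^sub>v v - c \<cdot>\<^sub>v v)"
  shows "eigen_decomposable N A S v"
proof -
  have A: "A \<in> carrier_mat N N" using h hermitian_op_carrier by auto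
  obtain g where fam: "eigen_family N A S g" and eq: "A *\<^sub>v v - c \<cdot>\<^sub>v v = vec_sum N S g"
    using dec unfolding eigen_decomposable_def by auto
  have gc: "\<And>a. a \<in> S \<Longrightarrow> g a \<in> carrier_vec N" and ge: "\<And>a. a \<in> S \<Longrightarrow> A *\<^sub>v g a = a \<cdot>\<^sub>v g a"
    using fam unfolding eigen_family_def by auto
  define g' where "g' = (\<lambda>a. (1 / (a - c)) \<cdot>\<^sub>v g a)"
  define l where "l = vec_sum N (S - {c}) g'"
  define u where "u = v - l"
  have l: "l \<in> carrier_vec N" and u: "u \<in> carrier_vec N" unfolding u_def l_def using v by auto
  have Al: "A *\<^sub>v l - c \<cdot>\<^sub>v l = vec_sum N (S - {c}) g"
    unfolding l_def g'_def
    by (rule eigen_family_shift_inverse[OF A]) (use fam in \<open>auto simp: eigen_family_def\<close>)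
  have Au: "A *\<^sub>v u - c \<cdot>\<^sub>v u = g c"
  proof (rule eq_vecI)
    fix i assume "i < dim_vec (g c)"
    then have i: "i < N" using gc[OF cS] by auto
    have "(A *\<^sub>v u - c \<cdot>\<^sub>v u) $ i = (A *\<^sub>v v - c \<cdot>\<^sub>v v) $ i - (A *\<^sub>v l - c \<cdot>\<^sub>v l) $ i"
      unfolding u_def using i A v l by (simp add: mult_minus_distrib_mat_vec algebra_simps)
    also have "\<dots> = g c $ i" unfolding eq Al using i S cS by (simp add: sum.remove)
    finally show "(A *\<^sub>v u - c \<cdot>\<^sub>v u) $ i = g c $ i" .
  qed (use A u gc[OF cS] in auto)
  have "g c = 0\<^sub>v N" by (rule eigenvector_orthogonal_shift_range[OF h real[OF cS] u ge[OF cS] Au])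
  have Auc: "A *\<^sub>v u = c \<cdot>\<^sub>v u"
  proof (rule eq_vecI)
    fix i assume "i < dim_vec (c \<cdot>\<^sub>v u)"
    then show "(A *\<^sub>v u) $ i = (c \<cdot>\<^sub>v u) $ i"
      using arg_cong[OF Au, of "\<lambda>x. x $ i"] \<open>g c = 0\<^sub>v N\<close> u A by simp
  qed (use A u in simp)
  have "eigen_family N A S (g'(c := u))"
    unfolding eigen_family_def g'_def using u Auc gc ge by (auto simp: mult_mat_vec[OF A])
  moreover have "v = vec_sum N S (g'(c := u))"
  proof (rule eq_vecI)
    fix i assume "i < dim_vec (vec_sum N S (g'(c := u)))"
    then have i: "i < N" by simp
    have "vec_sum N S (g'(c := u)) $ i = u $ i + l $ i"
      using i S cS by (simp add: sum.remove l_def)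
    then show "v $ i = vec_sum N S (g'(c := u)) $ i" using i v l by (simp add: u_def)
  qed (use v in simp)
  ultimately show ?thesis unfolding eigen_decomposable_def by blast
qed

lemma upper_triangular_shift_vanishing:
  fixes T :: "'a :: comm_ring_1 mat"
  assumes T: "T \<in> carrier_mat n n" "upper_triangular T" and u: "u \<in> carrier_vec n"
    and uz: "\<And>j. k < j \<Longrightarrow> j < n \<Longrightarrow> u $ j = 0" and ki: "k \<le> i" and i: "i < n"
  shows "(T *\<^sub>v u - T $$ (k, k) \<cdot>\<^sub>v u) $ i = 0"
proof -
  have "(T *\<^sub>v u) $ i = (\<Sum>j<n. T $$ (i, j) * u $ j)"
    using T u i by (simp add: scalar_prod_def lessThan_atLeast0)
  also have "\<dots> = (\<Sum>j\<in>{i}. T $$ (i, j) * u $ j)"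
  proof (rule sum.mono_neutral_right)
    show "\<forall>j\<in>{..<n} - {i}. T $$ (i, j) * u $ j = 0"
    proof
      fix j assume "j \<in> {..<n} - {i}"
      then consider "j < i" | "k < j" "j < n" using ki by force
      then show "T $$ (i, j) * u $ j = 0"
        by cases (use T i uz in \<open>auto simp: upper_triangularD\<close>)
    qed
  qed (use i in auto)
  finally show ?thesis
    using T u i ki uz by (cases "i = k") auto
qed

text \<open>Induction along a triangularisation \<open>Q A = T Q\<close>: if the coordinates of \<open>Q v\<close>
  vanish from index \<open>k + 1\<close> on, those of \<open>Q (A - T\<^sub>k\<^sub>k) v\<close> vanish from \<open>k\<close> on.\<close>

lemma eigen_decomposable_triangularizable:
  assumes h: "hermitian_op N A" and S: "finite S" and real: "\<And>a. a \<in> S \<Longrightarrow> cnj a = a"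
    and T: "T \<in> carrier_mat N N" "upper_triangular T" and diag: "\<And>k. k < N \<Longrightarrow> T $$ (k, k) \<in> S"
    and P: "P \<in> carrier_mat N N" and Q: "Q \<in> carrier_mat N N" and PQ: "P * Q = 1\<^sub>m N"
    and QA: "Q * A = T * Q"
    and v: "v \<in> carrier_vec N" and k: "k \<le> N" and vanish: "\<And>i. k \<le> i \<Longrightarrow> i < N \<Longrightarrow> (Q *\<^sub>v v) $ i = 0"
  shows "eigen_decomposable N A S v"
  using k v vanish
proof (induction k arbitrary: v)
  case 0
  have A: "A \<in> carrier_mat N N" using h hermitian_op_carrier by auto
  have "Q *\<^sub>v v = 0\<^sub>v N"
  proof (rule eq_vecI)
    fix i assume "i < dim_vec (0\<^sub>v N :: complex vec)"
    then show "(Q *\<^sub>v v) $ i = 0\<^sub>v N $ i" using 0(3)[of i] by simp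
  qed (use Q in simp)
  have "v = (P * Q) *\<^sub>v v" using PQ 0(2) by simp
  also have "\<dots> = P *\<^sub>v 0\<^sub>v N"
    unfolding assoc_mult_mat_vec[OF P Q 0(2)] \<open>Q *\<^sub>v v = 0\<^sub>v N\<close> ..
  also have "\<dots> = 0\<^sub>v N" using P by (intro eq_vecI) auto
  finally show ?case using eigen_decomposable_zero[OF A] by (simp only:)
next
  case (Suc k)
  have A: "A \<in> carrier_mat N N" using h hermitian_op_carrier by auto
  have k: "k < N" using Suc.prems(1) by simp
  define c where "c = T $$ (k, k)"
  define u where "u = Q *\<^sub>v v"
  define w where "w = A *\<^sub>v v - c \<cdot>\<^sub>v v"
  have u: "u \<in> carrier_vec N" and w: "w \<in> carrier_vec N"
    unfolding u_def w_def using Q A Suc.prems(2) by auto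
  have "Q *\<^sub>v (A *\<^sub>v v) = (T * Q) *\<^sub>v v"
    using assoc_mult_mat_vec[OF Q A Suc.prems(2)] QA by simp
  also have "\<dots> = T *\<^sub>v u"
    unfolding u_def by (rule assoc_mult_mat_vec[OF T(1) Q Suc.prems(2)])
  finally have "Q *\<^sub>v w = T *\<^sub>v u - c \<cdot>\<^sub>v u"
    unfolding w_def u_def using Q A Suc.prems(2)
    by (simp add: mult_minus_distrib_mat_vec mult_mat_vec)
  then have "(Q *\<^sub>v w) $ i = 0" if "k \<le> i" "i < N" for i
    unfolding c_def
    using upper_triangular_shift_vanishing[OF T u _ that] Suc.prems(3) by (simp add: u_def)
  then have "eigen_decomposable N A S w"
    using Suc.IH[OF _ w] k by simp
  then show ?case
    using eigen_decomposable_shift[OF h S real diag[OF k] Suc.prems(2)]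
    unfolding w_def c_def by blast
qed

lemma mult_mat_vec_unit_vec_index:
  fixes M :: "'a :: semiring_1 mat"
  shows "M \<in> carrier_mat n n \<Longrightarrow> i < n \<Longrightarrow> j < n \<Longrightarrow> (M *\<^sub>v unit_vec n j) $ i = M $$ (i, j)"
  by simp

lemma cscalar_prod_unit_vec:
  fixes x :: "complex vec"
  assumes "x \<in> carrier_vec n" "i < n"
  shows "x \<bullet>c unit_vec n i = x $ i" and "unit_vec n i \<bullet>c x = cnj (x $ i)"
proof -
  have "conjugate (unit_vec n i) = (unit_vec n i :: complex vec)"
    using assms(2) by (intro eq_vecI) auto
  then show "x \<bullet>c unit_vec n i = x $ i" using assms by simp
  show "unit_vec n i \<bullet>c x = cnj (x $ i)" using assms by simp
qed

lemma eq_mat_by_mult_vec: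
  fixes M M' :: "complex mat"
  assumes M: "M \<in> carrier_mat n n" and M': "M' \<in> carrier_mat n n"
    and eq: "\<And>v. v \<in> carrier_vec n \<Longrightarrow> M *\<^sub>v v = M' *\<^sub>v v"
  shows "M = M'"
proof (rule eq_matI)
  fix i j assume "i < dim_row M'" "j < dim_col M'"
  then have i: "i < n" and j: "j < n" using M' by auto
  have "M $$ (i, j) = (M *\<^sub>v unit_vec n j) $ i" using mult_mat_vec_unit_vec_index[OF M i j] ..
  also have "\<dots> = (M' *\<^sub>v unit_vec n j) $ i" using eq by simp
  also have "\<dots> = M' $$ (i, j)" using mult_mat_vec_unit_vec_index[OF M' i j] .
  finally show "M $$ (i, j) = M' $$ (i, j)" .
qed (use M M' in auto)

text \<open>\<open>P' P = P\<close> and \<open>P P' = P'\<close>; taking adjoints of the first gives \<open>P P' = P\<close>.\<close>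

lemma orthogonal_projection_unique:
  fixes P P' :: "complex mat"
  assumes P: "hermitian_op N P" "P * P = P" and P': "hermitian_op N P'" "P' * P' = P'"
    and range: "{v \<in> carrier_vec N. P *\<^sub>v v = v} = {v \<in> carrier_vec N. P' *\<^sub>v v = v}"
  shows "P = P'"
proof -
  have Pc: "P \<in> carrier_mat N N" and P'c: "P' \<in> carrier_mat N N"
    using P P' hermitian_op_carrier by auto
  have absorb: "Q' * Q = Q"
    if Q: "Q \<in> carrier_mat N N" "Q * Q = Q" and Q': "Q' \<in> carrier_mat N N"
      and fix_range: "\<And>v. v \<in> carrier_vec N \<Longrightarrow> Q *\<^sub>v v = v \<Longrightarrow> Q' *\<^sub>v v = v"
    for Q Q' :: "complex mat"
  proof (rule eq_mat_by_mult_vec[of _ N])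
    fix v :: "complex vec" assume v: "v \<in> carrier_vec N"
    have "Q *\<^sub>v (Q *\<^sub>v v) = Q *\<^sub>v v" using assoc_mult_mat_vec[OF Q(1) Q(1) v] Q(2) by simp
    then have "Q' *\<^sub>v (Q *\<^sub>v v) = Q *\<^sub>v v" using fix_range Q(1) v by auto
    then show "(Q' * Q) *\<^sub>v v = Q *\<^sub>v v" using assoc_mult_mat_vec[OF Q' Q(1) v] by simp
  qed (use Q Q' in auto)
  have l1: "P' * P = P" by (rule absorb) (use Pc P'c P range in auto)
  have l2: "P * P' = P'" by (rule absorb) (use Pc P'c P' range in auto)
  show ?thesis
  proof (rule eq_matI)
    fix i j assume "i < dim_row P'" "j < dim_col P'"
    then have i: "i < N" and j: "j < N" using P'c by auto
    have "P $$ (i, j) = cnj ((P' * P) $$ (j, i))"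
      using hermitian_op_cnj[OF P(1) i j] l1 by simp
    also have "(P' * P) $$ (j, i) = (\<Sum>k<N. P' $$ (j, k) * P $$ (k, i))"
      using Pc P'c i j by (simp add: scalar_prod_def lessThan_atLeast0)
    also have "cnj \<dots> = (\<Sum>k<N. P $$ (i, k) * P' $$ (k, j))"
      unfolding cnj_sum complex_cnj_mult
      by (rule sum.cong) (auto simp: hermitian_op_cnj[OF P(1)] hermitian_op_cnj[OF P'(1)] i j mult.commute)
    also have "\<dots> = P' $$ (i, j)"
      using arg_cong[OF l2, of "\<lambda>M. M $$ (i, j)"] Pc P'c i j
      by (simp add: scalar_prod_def lessThan_atLeast0)
    finally show "P $$ (i, j) = P' $$ (i, j)" .
  qed (use Pc P'c in auto)
qed

lemma eig_proj_eqI: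
  assumes P: "hermitian_op N P" "P * P = P"
    and range: "{v \<in> carrier_vec N. P *\<^sub>v v = v} = {v \<in> carrier_vec N. A *\<^sub>v v = x \<cdot>\<^sub>v v}"
  shows "eig_proj N A x = P"
  unfolding eig_proj_def
proof (rule the_equality)
  show "P \<in> carrier_mat N N \<and> mat_adjoint P = P \<and> P * P = P \<and>
      {v \<in> carrier_vec N. P *\<^sub>v v = v} = {v \<in> carrier_vec N. A *\<^sub>v v = x \<cdot>\<^sub>v v}"
    using assms unfolding hermitian_op_def by blast
  fix P' assume P': "P' \<in> carrier_mat N N \<and> mat_adjoint P' = P' \<and> P' * P' = P' \<and>
      {v \<in> carrier_vec N. P' *\<^sub>v v = v} = {v \<in> carrier_vec N. A *\<^sub>v v = x \<cdot>\<^sub>v v}"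
  then have "hermitian_op N P'" unfolding hermitian_op_def by blast
  then show "P' = P"
    by (rule orthogonal_projection_unique[OF _ _ P]) (use P' range in simp_all)
qed

locale hermitian_matrix =
  fixes N :: nat and A :: "complex mat"
  assumes hermitian: "hermitian_op N A"
begin

abbreviation eigenvalues :: "complex set" where
  "eigenvalues \<equiv> {x. eigenvalue A x}"

lemma carrier: "A \<in> carrier_mat N N"
  using hermitian hermitian_op_carrier by auto

lemma finite_eigenvalues: "finite eigenvalues"
  and eigenvalue_real: "a \<in> eigenvalues \<Longrightarrow> cnj a = a"
  using hermitian_op_spectrum[OF hermitian] by auto

lemma eigenvalue_iff_char_poly_linear_factor:
  assumes "char_poly A = (\<Prod>a\<leftarrow>es. [:- a, 1:])"
  shows "eigenvalue A x \<longleftrightarrow> x \<in> set es"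
proof -
  have "poly (\<Prod>a\<leftarrow>es. [:- a, 1:]) x = 0 \<longleftrightarrow> x \<in> set es"
    by (induction es) auto
  then show ?thesis using eigenvalue_root_char_poly[OF carrier] assms by simp
qed

lemma eigen_decomposable_vec:
  assumes v: "v \<in> carrier_vec N"
  shows "eigen_decomposable N A eigenvalues v"
proof -
  obtain es where "Polynomial.smult (lead_coeff (char_poly A)) (\<Prod>a\<leftarrow>es. [:- a, 1:]) = char_poly A"
    using fundamental_theorem_algebra_factorized by blast
  then have cp: "char_poly A = (\<Prod>a\<leftarrow>es. [:- a, 1:])"
    using degree_monic_char_poly[OF carrier] by simp
  obtain T P Q where "schur_decomposition A es = (T, P, Q)"
    by (cases "schur_decomposition A es") auto
  from schur_decomposition[OF carrier cp this]
  have sim: "similar_mat_wit A T P Q" and ut: "upper_triangular T" and dg: "diag_mat T = es"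
    by auto
  note sim = similar_mat_witD2[OF carrier sim]
  have T: "T \<in> carrier_mat N N" and P: "P \<in> carrier_mat N N" and Q: "Q \<in> carrier_mat N N"
    using sim by auto
  have diag: "T $$ (k, k) \<in> eigenvalues" if "k < N" for k
  proof -
    have "T $$ (k, k) \<in> set (diag_mat T)" using that T by (simp add: diag_mat_def)
    then show ?thesis using dg eigenvalue_iff_char_poly_linear_factor[OF cp] by simp
  qed
  have "Q * A = (Q * P) * (T * Q)"
    using sim(3) T P Q by (simp add: assoc_mult_mat[OF Q P mult_carrier_mat[OF T Q]])
  then have QA: "Q * A = T * Q" using sim(2) T Q by simp
  show ?thesis
  proof (rule eigen_decomposable_triangularizable[OF hermitian finite_eigenvalues eigenvalue_real
        T ut diag P Q sim(1) QA v order.refl])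
    fix i assume "N \<le> i" "i < N"
    then show "(Q *\<^sub>v v) $ i = 0" by simp
  qed
qed

lemma eigenvalues_nonempty:
  assumes "N > 0" shows "eigenvalues \<noteq> {}"
proof
  assume empty: "eigenvalues = {}"
  obtain g where "unit_vec N 0 = vec_sum N eigenvalues g"
    using eigen_decomposable_vec[of "unit_vec N 0"] unfolding eigen_decomposable_def by auto
  then have "unit_vec N 0 $ 0 = (0 :: complex)" using assms empty by simp
  then show False using assms by simp
qed

lemma eigen_family_vec_sum_zero:
  assumes d: "eigen_family N A eigenvalues d" and zero: "vec_sum N eigenvalues d = 0\<^sub>v N"
    and a: "a \<in> eigenvalues"
  shows "d a = 0\<^sub>v N"
proof -
  have dc: "\<And>b. b \<in> eigenvalues \<Longrightarrow> d b \<in> carrier_vec N"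
    and de: "\<And>b. b \<in> eigenvalues \<Longrightarrow> A *\<^sub>v d b = b \<cdot>\<^sub>v d b"
    using d unfolding eigen_family_def by auto
  have "0 = vec_sum N eigenvalues d \<bullet>c d a" using zero dc[OF a] by simp
  also have "\<dots> = (\<Sum>b\<in>eigenvalues. d b \<bullet>c d a)"
    by (rule vec_sum_cscalar_prod_left[OF dc[OF a]])
  also have "\<dots> = d a \<bullet>c d a"
  proof (rule sum.remove[OF finite_eigenvalues a, THEN trans])
    show "d a \<bullet>c d a + (\<Sum>b\<in>eigenvalues - {a}. d b \<bullet>c d a) = d a \<bullet>c d a"
      using hermitian_op_eigenvectors_orthogonal[OF hermitian dc dc[OF a] de de[OF a]
          eigenvalue_real[OF a]]
      by simp
  qed
  finally show ?thesis using dc[OF a] by simp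
qed

lemma eigen_decomposition_unique:
  assumes g: "eigen_family N A eigenvalues g" and g': "eigen_family N A eigenvalues g'"
    and eq: "vec_sum N eigenvalues g = vec_sum N eigenvalues g'" and a: "a \<in> eigenvalues"
  shows "g a = g' a"
proof -
  have dims: "dim_vec (g b) = N \<and> dim_vec (g' b) = N" if "b \<in> eigenvalues" for b
    using g g' that unfolding eigen_family_def by auto
  have "eigen_family N A eigenvalues (\<lambda>b. g b - g' b)"
    unfolding eigen_family_def
  proof (intro ballI conjI)
    fix b assume b: "b \<in> eigenvalues"
    then show "g b - g' b \<in> carrier_vec N" using g g' unfolding eigen_family_def by auto
    have "A *\<^sub>v (g b - g' b) = b \<cdot>\<^sub>v g b - b \<cdot>\<^sub>v g' b"
      using g g' b carrier unfolding eigen_family_def by (simp add: mult_minus_distrib_mat_vec)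
    also have "\<dots> = b \<cdot>\<^sub>v (g b - g' b)"
      using dims[OF b] by (intro eq_vecI) (auto simp: algebra_simps)
    finally show "A *\<^sub>v (g b - g' b) = b \<cdot>\<^sub>v (g b - g' b)" .
  qed
  moreover have "vec_sum N eigenvalues (\<lambda>b. g b - g' b) = 0\<^sub>v N"
  proof (rule eq_vecI)
    fix i assume "i < dim_vec (0\<^sub>v N :: complex vec)"
    then have i: "i < N" by simp
    have "vec_sum N eigenvalues (\<lambda>b. g b - g' b) $ i = (\<Sum>b\<in>eigenvalues. g b $ i - g' b $ i)"
      using i dims by (auto intro!: sum.cong)
    also have "\<dots> = 0" using arg_cong[OF eq, of "\<lambda>x. x $ i"] i by (simp add: sum_subtractf)
    finally show "vec_sum N eigenvalues (\<lambda>b. g b - g' b) $ i = 0\<^sub>v N $ i" using i by simp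
  qed simp
  ultimately have "g a - g' a = 0\<^sub>v N" by (rule eigen_family_vec_sum_zero[OF _ _ a])
  then show ?thesis using dims[OF a] by (intro eq_vecI) (auto simp: vec_eq_iff)
qed

definition eigen_component :: "complex vec \<Rightarrow> complex \<Rightarrow> complex vec" where
  "eigen_component v = (SOME g. eigen_family N A eigenvalues g \<and> v = vec_sum N eigenvalues g)"

lemma eigen_component:
  assumes "v \<in> carrier_vec N"
  shows "eigen_family N A eigenvalues (eigen_component v)"
    and "v = vec_sum N eigenvalues (eigen_component v)"
  using someI_ex[OF eigen_decomposable_vec[OF assms, unfolded eigen_decomposable_def]]
  unfolding eigen_component_def by auto

lemma eigen_component_eq:
  assumes "v \<in> carrier_vec N" "eigen_family N A eigenvalues g" "v = vec_sum N eigenvalues g"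
    and "a \<in> eigenvalues"
  shows "eigen_component v a = g a"
proof -
  have "vec_sum N eigenvalues (eigen_component v) = vec_sum N eigenvalues g"
    using eigen_component(2)[OF assms(1)] assms(3) by (rule trans[OF sym])
  then show ?thesis
    by (rule eigen_decomposition_unique[OF eigen_component(1)[OF assms(1)] assms(2) _ assms(4)])
qed

lemma eigen_component_carrier: "v \<in> carrier_vec N \<Longrightarrow> a \<in> eigenvalues \<Longrightarrow> eigen_component v a \<in> carrier_vec N"
  and eigen_component_eigenvector:
    "v \<in> carrier_vec N \<Longrightarrow> a \<in> eigenvalues \<Longrightarrow> A *\<^sub>v eigen_component v a = a \<cdot>\<^sub>v eigen_component v a"
  using eigen_component(1) unfolding eigen_family_def by auto

definition spectral_proj :: "complex \<Rightarrow> complex mat" where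
  "spectral_proj a = mat N N (\<lambda>(i, j). eigen_component (unit_vec N j) a $ i)"

lemma spectral_proj_carrier: "spectral_proj a \<in> carrier_mat N N"
  unfolding spectral_proj_def by auto

lemma eigen_family_unit_vec_components:
  "eigen_family N A eigenvalues (\<lambda>b. vec_sum N {..<N} (\<lambda>j. v $ j \<cdot>\<^sub>v eigen_component (unit_vec N j) b))"
  unfolding eigen_family_def
proof (intro ballI conjI)
  fix b assume b: "b \<in> eigenvalues"
  let ?e = "\<lambda>j. eigen_component (unit_vec N j) b"
  have e: "?e j \<in> carrier_vec N" "dim_vec (?e j) = N" "A *\<^sub>v ?e j = b \<cdot>\<^sub>v ?e j" for j
    using eigen_component_carrier[OF _ b] eigen_component_eigenvector[OF _ b] by auto
  show "vec_sum N {..<N} (\<lambda>j. v $ j \<cdot>\<^sub>v ?e j) \<in> carrier_vec N" by simp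
  have "A *\<^sub>v vec_sum N {..<N} (\<lambda>j. v $ j \<cdot>\<^sub>v ?e j) = vec_sum N {..<N} (\<lambda>j. v $ j \<cdot>\<^sub>v (A *\<^sub>v ?e j))"
    using e(1) by (subst mult_mat_vec_sum[OF carrier]) (auto simp: mult_mat_vec[OF carrier] intro!: vec_sum_cong)
  also have "\<dots> = b \<cdot>\<^sub>v vec_sum N {..<N} (\<lambda>j. v $ j \<cdot>\<^sub>v ?e j)"
    using e(2,3) by (intro eq_vecI) (auto simp: sum_distrib_left mult_ac intro!: sum.cong)
  finally show "A *\<^sub>v vec_sum N {..<N} (\<lambda>j. v $ j \<cdot>\<^sub>v ?e j) = b \<cdot>\<^sub>v vec_sum N {..<N} (\<lambda>j. v $ j \<cdot>\<^sub>v ?e j)" .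
qed

lemma vec_sum_unit_vec_components:
  assumes v: "v \<in> carrier_vec N"
  shows "v = vec_sum N eigenvalues (\<lambda>b. vec_sum N {..<N} (\<lambda>j. v $ j \<cdot>\<^sub>v eigen_component (unit_vec N j) b))"
proof (rule eq_vecI)
  let ?e = "\<lambda>j b. eigen_component (unit_vec N j) b"
  fix i assume "i < dim_vec (vec_sum N eigenvalues (\<lambda>b. vec_sum N {..<N} (\<lambda>j. v $ j \<cdot>\<^sub>v ?e j b)))"
  then have i: "i < N" by simp
  have unit: "unit_vec N j $ i = (\<Sum>b\<in>eigenvalues. ?e j b $ i)" for j
    using arg_cong[OF eigen_component(2)[of "unit_vec N j"], of "\<lambda>x. x $ i"] i by simp
  have "\<And>b j. b \<in> eigenvalues \<Longrightarrow> dim_vec (?e j b) = N"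
    using eigen_component_carrier by auto
  then have "vec_sum N eigenvalues (\<lambda>b. vec_sum N {..<N} (\<lambda>j. v $ j \<cdot>\<^sub>v ?e j b)) $ i
      = (\<Sum>b\<in>eigenvalues. \<Sum>j<N. v $ j * ?e j b $ i)"
    using i by (auto intro!: sum.cong)
  also have "\<dots> = (\<Sum>j<N. v $ j * unit_vec N j $ i)"
    by (simp add: sum.swap[of _ eigenvalues] sum_distrib_left unit)
  also have "\<dots> = unit_vec N i \<bullet> v"
    using i v by (auto simp: scalar_prod_def lessThan_atLeast0 mult.commute intro!: sum.cong)
  also have "\<dots> = v $ i" using i v by simp
  finally show "v $ i = vec_sum N eigenvalues (\<lambda>b. vec_sum N {..<N} (\<lambda>j. v $ j \<cdot>\<^sub>v ?e j b)) $ i" ..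
qed (use v in simp)

lemma spectral_proj_mult_vec:
  assumes v: "v \<in> carrier_vec N" and a: "a \<in> eigenvalues"
  shows "spectral_proj a *\<^sub>v v = eigen_component v a"
proof -
  let ?e = "\<lambda>j. eigen_component (unit_vec N j) a"
  have "dim_vec (?e j) = N" for j using eigen_component_carrier[OF _ a] by auto
  then have "spectral_proj a *\<^sub>v v = vec_sum N {..<N} (\<lambda>j. v $ j \<cdot>\<^sub>v ?e j)"
    unfolding spectral_proj_def using v
    by (intro eq_vecI) (auto simp: scalar_prod_def lessThan_atLeast0 mult.commute intro!: sum.cong)
  also have "\<dots> = eigen_component v a"
    by (rule eigen_component_eq[OF v eigen_family_unit_vec_components vec_sum_unit_vec_components[OF v] a,
          symmetric])
  finally show ?thesis .
qed

lemma spectral_proj_fixed_iff: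
  assumes v: "v \<in> carrier_vec N" and a: "a \<in> eigenvalues"
  shows "spectral_proj a *\<^sub>v v = v \<longleftrightarrow> A *\<^sub>v v = a \<cdot>\<^sub>v v"
proof
  assume fixed: "spectral_proj a *\<^sub>v v = v"
  have "eigen_component v a = spectral_proj a *\<^sub>v v" by (rule spectral_proj_mult_vec[OF v a, symmetric])
  also have "\<dots> = v" by (rule fixed)
  finally show "A *\<^sub>v v = a \<cdot>\<^sub>v v" using eigen_component_eigenvector[OF v a] by simp
next
  assume e: "A *\<^sub>v v = a \<cdot>\<^sub>v v"
  define g where "g = (\<lambda>b. if b = a then v else 0\<^sub>v N)"
  have fam: "eigen_family N A eigenvalues g" unfolding eigen_family_def g_def using v e carrier by auto
  have "v = vec_sum N eigenvalues g"
  proof (rule eq_vecI)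
    fix i assume "i < dim_vec (vec_sum N eigenvalues g)"
    then have "vec_sum N eigenvalues g $ i = (\<Sum>b\<in>eigenvalues. if b = a then v $ i else 0)"
      by (auto simp: g_def intro!: sum.cong)
    then show "v $ i = vec_sum N eigenvalues g $ i" using a finite_eigenvalues by simp
  qed (use v in simp)
  from eigen_component_eq[OF v fam this a] have "eigen_component v a = v" by (simp add: g_def)
  then show "spectral_proj a *\<^sub>v v = v" using spectral_proj_mult_vec[OF v a] by simp
qed

lemma spectral_proj_idem:
  assumes a: "a \<in> eigenvalues" shows "spectral_proj a * spectral_proj a = spectral_proj a"
proof (rule eq_mat_by_mult_vec[of _ N])
  fix v :: "complex vec" assume v: "v \<in> carrier_vec N"
  have "(spectral_proj a * spectral_proj a) *\<^sub>v v = spectral_proj a *\<^sub>v eigen_component v a"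
    using assoc_mult_mat_vec[OF spectral_proj_carrier spectral_proj_carrier v]
      spectral_proj_mult_vec[OF v a] by simp
  also have "\<dots> = eigen_component v a"
    using spectral_proj_fixed_iff[OF eigen_component_carrier[OF v a] a]
      eigen_component_eigenvector[OF v a] by blast
  also have "\<dots> = spectral_proj a *\<^sub>v v" by (rule spectral_proj_mult_vec[OF v a, symmetric])
  finally show "(spectral_proj a * spectral_proj a) *\<^sub>v v = spectral_proj a *\<^sub>v v" .
qed (use mult_carrier_mat[OF spectral_proj_carrier spectral_proj_carrier] spectral_proj_carrier in auto)

lemma spectral_proj_cscalar_prod:
  assumes u: "u \<in> carrier_vec N" and w: "w \<in> carrier_vec N" and a: "a \<in> eigenvalues"
  shows "(spectral_proj a *\<^sub>v u) \<bullet>c w = u \<bullet>c (spectral_proj a *\<^sub>v w)"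
proof -
  let ?c = eigen_component
  have orth: "?c x b \<bullet>c ?c y c = 0"
    if "x \<in> carrier_vec N" "y \<in> carrier_vec N" "b \<in> eigenvalues" "c \<in> eigenvalues" "b \<noteq> c" for x y b c
    by (rule hermitian_op_eigenvectors_orthogonal[OF hermitian
          eigen_component_carrier[OF that(1,3)] eigen_component_carrier[OF that(2,4)]
          eigen_component_eigenvector[OF that(1,3)] eigen_component_eigenvector[OF that(2,4)]
          eigenvalue_real[OF that(4)] that(5)])
  have "(spectral_proj a *\<^sub>v u) \<bullet>c w = ?c u a \<bullet>c vec_sum N eigenvalues (?c w)"
    by (simp only: spectral_proj_mult_vec[OF u a] eigen_component(2)[OF w, symmetric])
  also have "\<dots> = (\<Sum>b\<in>eigenvalues. ?c u a \<bullet>c ?c w b)"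
    by (rule vec_sum_cscalar_prod_right) (rule eigen_component_carrier[OF w])
  also have "\<dots> = ?c u a \<bullet>c ?c w a"
    by (subst sum.remove[OF finite_eigenvalues a]) (auto intro!: sum.neutral orth[OF u w a])
  also have "\<dots> = (\<Sum>b\<in>eigenvalues. ?c u b \<bullet>c ?c w a)"
    by (subst sum.remove[OF finite_eigenvalues a]) (auto intro!: sum.neutral orth[OF u w _ a])
  also have "\<dots> = vec_sum N eigenvalues (?c u) \<bullet>c ?c w a"
    by (rule vec_sum_cscalar_prod_left[symmetric]) (rule eigen_component_carrier[OF w a])
  also have "\<dots> = u \<bullet>c (spectral_proj a *\<^sub>v w)"
    by (simp only: spectral_proj_mult_vec[OF w a] eigen_component(2)[OF u, symmetric])
  finally show ?thesis .
qed

lemma hermitian_spectral_proj: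
  assumes a: "a \<in> eigenvalues" shows "hermitian_op N (spectral_proj a)"
proof (rule hermitian_opI[OF spectral_proj_carrier])
  fix i j assume i: "i < N" and j: "j < N"
  let ?P = "spectral_proj a"
  have col: "?P *\<^sub>v unit_vec N k \<in> carrier_vec N" for k
    by (rule mult_mat_vec_carrier[OF spectral_proj_carrier unit_vec_carrier])
  have "?P $$ (i, j) = (?P *\<^sub>v unit_vec N j) \<bullet>c unit_vec N i"
    using mult_mat_vec_unit_vec_index[OF spectral_proj_carrier i j] cscalar_prod_unit_vec(1)[OF col i]
    by simp
  also have "\<dots> = unit_vec N j \<bullet>c (?P *\<^sub>v unit_vec N i)"
    by (rule spectral_proj_cscalar_prod[OF _ _ a]) auto
  also have "\<dots> = cnj (?P $$ (j, i))"
    using mult_mat_vec_unit_vec_index[OF spectral_proj_carrier j i] cscalar_prod_unit_vec(2)[OF col j]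
    by simp
  finally show "?P $$ (i, j) = cnj (?P $$ (j, i))" .
qed

lemma sum_spectral_proj:
  assumes "i < N" "j < N"
  shows "(\<Sum>a\<in>eigenvalues. spectral_proj a $$ (i, j)) = (if i = j then 1 else 0)"
  using arg_cong[OF eigen_component(2)[of "unit_vec N j"], of "\<lambda>x. x $ i"] assms
  by (simp add: spectral_proj_def)

lemma eig_proj_eq_spectral_proj:
  assumes a: "a \<in> eigenvalues" shows "eig_proj N A a = spectral_proj a"
  using eig_proj_eqI[OF hermitian_spectral_proj[OF a] spectral_proj_idem[OF a]]
    spectral_proj_fixed_iff[OF _ a] by blast

lemma eig_proj_not_eigenvalue:
  assumes a: "a \<notin> eigenvalues" shows "eig_proj N A a = 0\<^sub>m N N"
proof (rule eig_proj_eqI)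
  show "hermitian_op N (0\<^sub>m N N)" by (rule hermitian_opI) auto
  show "0\<^sub>m N N * 0\<^sub>m N N = (0\<^sub>m N N :: complex mat)" by simp
  have "0\<^sub>m N N *\<^sub>v v = v \<longleftrightarrow> A *\<^sub>v v = a \<cdot>\<^sub>v v" if v: "v \<in> carrier_vec N" for v
  proof -
    have "0\<^sub>m N N *\<^sub>v v = 0\<^sub>v N" using v by (intro eq_vecI) auto
    moreover have "A *\<^sub>v 0\<^sub>v N = a \<cdot>\<^sub>v 0\<^sub>v N" using carrier by (intro eq_vecI) auto
    moreover have "v = 0\<^sub>v N" if "A *\<^sub>v v = a \<cdot>\<^sub>v v"
      using a that v carrier unfolding eigenvalue_def eigenvector_def by auto
    ultimately show ?thesis by auto
  qed
  then show "{v \<in> carrier_vec N. 0\<^sub>m N N *\<^sub>v v = v} = {v \<in> carrier_vec N. A *\<^sub>v v = a \<cdot>\<^sub>v v}"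
    by blast
qed

lemma hermitian_eig_proj: "hermitian_op N (eig_proj N A a)"
proof (cases "a \<in> eigenvalues")
  case False
  then show ?thesis unfolding eig_proj_not_eigenvalue[OF False] by (intro hermitian_opI) auto
qed (simp add: eig_proj_eq_spectral_proj hermitian_spectral_proj)

lemma eig_proj_carrier: "eig_proj N A a \<in> carrier_mat N N"
  using hermitian_eig_proj hermitian_op_carrier by blast

lemma sum_eig_proj:
  assumes "i < N" "j < N"
  shows "(\<Sum>a\<in>eigenvalues. eig_proj N A a $$ (i, j)) = (if i = j then 1 else 0)"
  using sum_spectral_proj[OF assms] by (simp add: eig_proj_eq_spectral_proj)

end

definition real_eigenvalues :: "complex mat \<Rightarrow> real set" where
  "real_eigenvalues A = {x. eigenvalue A (complex_of_real x)}"

context hermitian_matrix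
begin

lemma eigenvalues_eq_image_real_eigenvalues: "eigenvalues = complex_of_real ` real_eigenvalues A"
proof (intro equalityI subsetI)
  fix a assume a: "a \<in> eigenvalues"
  then have "a \<in> \<real>" using eigenvalue_real Reals_cnj_iff by blast
  then have "complex_of_real (Re a) = a" by simp
  with a show "a \<in> complex_of_real ` real_eigenvalues A"
    unfolding real_eigenvalues_def by (intro image_eqI[of _ _ "Re a"]) auto
qed (auto simp: real_eigenvalues_def)

lemma finite_real_eigenvalues: "finite (real_eigenvalues A)"
  using finite_eigenvalues unfolding eigenvalues_eq_image_real_eigenvalues
  by (rule finite_imageD) (auto intro: inj_onI)

lemma card_real_eigenvalues: "card (real_eigenvalues A) = num_eigenvalues A"
  unfolding num_eigenvalues_def eigenvalues_eq_image_real_eigenvalues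
  by (rule card_image[symmetric]) (auto intro: inj_onI)

lemma real_eigenvalues_nonempty: "0 < N \<Longrightarrow> real_eigenvalues A \<noteq> {}"
  using eigenvalues_nonempty eigenvalues_eq_image_real_eigenvalues by auto

lemma eig_proj_not_real_eigenvalue:
  "x \<notin> real_eigenvalues A \<Longrightarrow> eig_proj N A (complex_of_real x) = 0\<^sub>m N N"
  by (rule eig_proj_not_eigenvalue) (simp add: real_eigenvalues_def)

lemma sum_eig_proj_real_eigenvalues:
  assumes "i < N" "j < N"
  shows "(\<Sum>x\<in>real_eigenvalues A. eig_proj N A (complex_of_real x) $$ (i, j)) = (if i = j then 1 else 0)"
proof -
  have "(\<Sum>x\<in>real_eigenvalues A. eig_proj N A (complex_of_real x) $$ (i, j))
      = (\<Sum>a\<in>eigenvalues. eig_proj N A a $$ (i, j))"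
    unfolding eigenvalues_eq_image_real_eigenvalues by (simp add: sum.reindex inj_on_def)
  then show ?thesis using sum_eig_proj[OF assms] by simp
qed

end

lemma mtrace_mult:
  "X \<in> carrier_mat n n \<Longrightarrow> Y \<in> carrier_mat n n \<Longrightarrow>
    mtrace (X * Y) = (\<Sum>i<n. \<Sum>k<n. X $$ (i, k) * Y $$ (k, i))"
  unfolding mtrace_def by (auto simp: scalar_prod_def lessThan_atLeast0 intro!: sum.cong)

lemma mtrace_mult_hermitian_real:
  assumes X: "hermitian_op N X" and Y: "hermitian_op N Y"
  shows "Im (mtrace (X * Y)) = 0"
proof -
  have Xc: "X \<in> carrier_mat N N" and Yc: "Y \<in> carrier_mat N N"
    using X Y hermitian_op_carrier by auto
  have "cnj (mtrace (X * Y)) = (\<Sum>i<N. \<Sum>k<N. X $$ (k, i) * Y $$ (i, k))"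
    unfolding mtrace_mult[OF Xc Yc] cnj_sum complex_cnj_mult
    by (auto intro!: sum.cong simp: hermitian_op_cnj[OF X] hermitian_op_cnj[OF Y])
  also have "\<dots> = mtrace (X * Y)"
    unfolding mtrace_mult[OF Xc Yc] by (subst sum.swap) (simp add: mult.commute)
  finally show ?thesis using Reals_cnj_iff complex_is_Real_iff by blast
qed

lemma mtrace_mult_lincomb:
  assumes X: "X \<in> carrier_mat n n" and M: "\<And>q. q \<in> Q \<Longrightarrow> M q \<in> carrier_mat n n"
  shows "mtrace (X * mat n n (\<lambda>ij. \<Sum>q\<in>Q. c q * M q $$ ij)) = (\<Sum>q\<in>Q. c q * mtrace (X * M q))"
proof -
  have "mtrace (X * mat n n (\<lambda>ij. \<Sum>q\<in>Q. c q * M q $$ ij))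
      = (\<Sum>i<n. \<Sum>k<n. X $$ (i, k) * (\<Sum>q\<in>Q. c q * M q $$ (k, i)))"
    using X by (subst mtrace_mult) auto
  also have "\<dots> = (\<Sum>q\<in>Q. c q * (\<Sum>i<n. \<Sum>k<n. X $$ (i, k) * M q $$ (k, i)))"
    by (simp add: sum_distrib_left sum.swap[of _ Q] mult_ac)
  also have "\<dots> = (\<Sum>q\<in>Q. c q * mtrace (X * M q))"
    using mtrace_mult[OF X M] by simp
  finally show ?thesis .
qed

lemma sum_mtrace_mult_resolution:
  assumes P: "\<And>r. r \<in> R \<Longrightarrow> P r \<in> carrier_mat n n"
    and resolution: "\<And>l k. l < n \<Longrightarrow> k < n \<Longrightarrow> (\<Sum>r\<in>R. P r $$ (l, k)) = (if l = k then 1 else 0)"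
    and X: "X \<in> carrier_mat n n" and Y: "Y \<in> carrier_mat n n"
  shows "(\<Sum>r\<in>R. mtrace (X * P r * Y)) = mtrace (X * Y)"
proof -
  have "(\<Sum>r\<in>R. mtrace (X * P r * Y))
      = (\<Sum>r\<in>R. \<Sum>i<n. \<Sum>k<n. (\<Sum>l<n. X $$ (i, l) * P r $$ (l, k)) * Y $$ (k, i))"
  proof (rule sum.cong[OF refl])
    fix r assume r: "r \<in> R"
    show "mtrace (X * P r * Y) = (\<Sum>i<n. \<Sum>k<n. (\<Sum>l<n. X $$ (i, l) * P r $$ (l, k)) * Y $$ (k, i))"
      using X P[OF r] Y by (subst mtrace_mult) (auto simp: scalar_prod_def lessThan_atLeast0 intro!: sum.cong)
  qed
  also have "\<dots> = (\<Sum>i<n. \<Sum>k<n. \<Sum>l<n. X $$ (i, l) * (\<Sum>r\<in>R. P r $$ (l, k)) * Y $$ (k, i))"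
    by (simp add: sum_distrib_left sum_distrib_right sum.swap[of _ R] mult_ac)
  also have "\<dots> = (\<Sum>i<n. \<Sum>k<n. X $$ (i, k) * Y $$ (k, i))"
  proof (intro sum.cong refl)
    fix i k assume "k \<in> {..<n}"
    then show "(\<Sum>l<n. X $$ (i, l) * (\<Sum>r\<in>R. P r $$ (l, k)) * Y $$ (k, i)) = X $$ (i, k) * Y $$ (k, i)"
      by (simp add: resolution if_distrib[of "\<lambda>x. _ * x * _"] cong: if_cong)
  qed
  also have "\<dots> = mtrace (X * Y)" using mtrace_mult[OF X Y] by simp
  finally show ?thesis .
qed

section \<open>Perturbations of the maximally mixed state\<close>

lemma cscalar_prod_mult_mat_vec:
  "M \<in> carrier_mat n n \<Longrightarrow> v \<in> carrier_vec n \<Longrightarrow>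
    (M *\<^sub>v v) \<bullet>c v = (\<Sum>i<n. \<Sum>j<n. M $$ (i, j) * v $ j * cnj (v $ i))"
  by (auto simp: cscalar_prod_sum scalar_prod_def lessThan_atLeast0 sum_distrib_right intro!: sum.cong)

lemma cscalar_prod_self:
  assumes "v \<in> carrier_vec n"
  shows "v \<bullet>c v = complex_of_real (\<Sum>i<n. (cmod (v $ i))\<^sup>2)"
proof -
  have "v \<bullet>c v = (\<Sum>i<n. complex_of_real ((cmod (v $ i))\<^sup>2))"
    unfolding cscalar_prod_sum_carrier[OF assms] complex_norm_square ..
  then show ?thesis by (simp only: of_real_sum)
qed

lemma hermitian_quadratic_form:
  assumes H: "hermitian_op N H" and v: "v \<in> carrier_vec N"
  defines "q \<equiv> \<Sum>i<N. \<Sum>j<N. H $$ (i, j) * v $ j * cnj (v $ i)"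
  shows "Im q = 0"
    and "cmod q \<le> (\<Sum>i<N. \<Sum>j<N. cmod (H $$ (i, j))) * (\<Sum>i<N. (cmod (v $ i))\<^sup>2)"
proof -
  have "cnj q = (\<Sum>i<N. \<Sum>j<N. H $$ (j, i) * cnj (v $ j) * v $ i)"
    unfolding q_def cnj_sum complex_cnj_mult by (auto intro!: sum.cong simp: hermitian_op_cnj[OF H])
  also have "\<dots> = q" unfolding q_def by (subst sum.swap) (auto intro!: sum.cong simp: mult_ac)
  finally show "Im q = 0" using Reals_cnj_iff complex_is_Real_iff by blast
  define s where "s = (\<Sum>i<N. (cmod (v $ i))\<^sup>2)"
  have s0: "0 \<le> s" unfolding s_def by (auto intro: sum_nonneg)
  have vi: "cmod (v $ i) \<le> sqrt s" if "i < N" for i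
  proof -
    have "(cmod (v $ i))\<^sup>2 \<le> s" unfolding s_def using that by (intro member_le_sum) auto
    then show ?thesis using real_le_rsqrt by blast
  qed
  have "cmod q \<le> (\<Sum>i<N. \<Sum>j<N. cmod (H $$ (i, j) * v $ j * cnj (v $ i)))"
    unfolding q_def by (rule order.trans[OF norm_sum sum_mono], rule norm_sum)
  also have "\<dots> \<le> (\<Sum>i<N. \<Sum>j<N. cmod (H $$ (i, j)) * s)"
  proof (intro sum_mono)
    fix i j assume "i \<in> {..<N}" "j \<in> {..<N}"
    then have "cmod (v $ j) * cmod (v $ i) \<le> sqrt s * sqrt s"
      using vi s0 by (intro mult_mono) auto
    also have "\<dots> = s" using s0 by simp
    finally show "cmod (H $$ (i, j) * v $ j * cnj (v $ i)) \<le> cmod (H $$ (i, j)) * s"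
      by (simp add: norm_mult mult_left_mono mult.assoc)
  qed
  also have "\<dots> = (\<Sum>i<N. \<Sum>j<N. cmod (H $$ (i, j))) * s" by (simp add: sum_distrib_right)
  finally show "cmod q \<le> (\<Sum>i<N. \<Sum>j<N. cmod (H $$ (i, j))) * (\<Sum>i<N. (cmod (v $ i))\<^sup>2)"
    unfolding s_def .
qed

definition perturbed_mixed :: "nat \<Rightarrow> complex mat \<Rightarrow> real \<Rightarrow> complex mat" where
  "perturbed_mixed N H t =
     mat N N (\<lambda>(i, j). (if i = j then 1 / of_nat N else 0) + complex_of_real t * H $$ (i, j))"

lemma perturbed_mixed_carrier: "perturbed_mixed N H t \<in> carrier_mat N N"
  unfolding perturbed_mixed_def by simp

lemma mtrace_mult_perturbed_mixed:
  assumes X: "X \<in> carrier_mat N N" and H: "H \<in> carrier_mat N N"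
  shows "mtrace (X * perturbed_mixed N H t)
    = mtrace (X * perturbed_mixed N H 0) + complex_of_real t * mtrace (X * H)"
  using X H
  by (simp add: mtrace_mult perturbed_mixed_carrier perturbed_mixed_def sum.distrib sum_distrib_left
      algebra_simps)

text \<open>With \<open>C = \<Sum>\<^sub>i\<^sub>j |H\<^sub>i\<^sub>j|\<close>, the form \<open>v\<^sup>* H v\<close> is bounded by \<open>C |v|\<^sup>2\<close>, so
  \<open>I/N + t H\<close> stays positive as long as \<open>t C \<le> 1/N\<close>.\<close>

lemma density_op_perturbed_mixed:
  assumes N: "0 < N" and H: "hermitian_op N H" and tr: "mtrace H = 0"
    and t: "0 \<le> t" "t * (\<Sum>i<N. \<Sum>j<N. cmod (H $$ (i, j))) \<le> 1 / real N"
  shows "density_op N (perturbed_mixed N H t)"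
  unfolding density_op_def psd_op_def
proof (intro conjI ballI perturbed_mixed_carrier)
  fix v :: "complex vec" assume v: "v \<in> carrier_vec N"
  define C where "C = (\<Sum>i<N. \<Sum>j<N. cmod (H $$ (i, j)))"
  define s where "s = (\<Sum>i<N. (cmod (v $ i))\<^sup>2)"
  define q where "q = (\<Sum>i<N. \<Sum>j<N. H $$ (i, j) * v $ j * cnj (v $ i))"
  have s0: "0 \<le> s" unfolding s_def by (auto intro: sum_nonneg)
  have q: "Im q = 0" "cmod q \<le> C * s"
    using hermitian_quadratic_form[OF H v] unfolding q_def C_def s_def by auto
  let ?\<delta> = "\<lambda>i j. if i = j then 1 / of_nat N else (0 :: complex)"
  have "(perturbed_mixed N H t *\<^sub>v v) \<bullet>c v
      = (\<Sum>i<N. \<Sum>j<N. ?\<delta> i j * (v $ j * cnj (v $ i))) + complex_of_real t * q"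
    unfolding cscalar_prod_mult_mat_vec[OF perturbed_mixed_carrier v] q_def
    by (simp add: perturbed_mixed_def sum.distrib sum_distrib_left algebra_simps)
  also have "(\<Sum>i<N. \<Sum>j<N. ?\<delta> i j * (v $ j * cnj (v $ i))) = (\<Sum>i<N. 1 / of_nat N * (v $ i * cnj (v $ i)))"
  proof (rule sum.cong[OF refl])
    fix i assume i: "i \<in> {..<N}"
    have "(\<Sum>j<N. ?\<delta> i j * (v $ j * cnj (v $ i)))
        = (\<Sum>j<N. if j = i then 1 / of_nat N * (v $ j * cnj (v $ i)) else 0)"
      by (intro sum.cong) auto
    then show "(\<Sum>j<N. ?\<delta> i j * (v $ j * cnj (v $ i))) = 1 / of_nat N * (v $ i * cnj (v $ i))"
      using i by simp
  qed
  also have "\<dots> = 1 / of_nat N * (v \<bullet>c v)"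
    by (simp add: cscalar_prod_sum_carrier[OF v] sum_distrib_left)
  also have "\<dots> = complex_of_real (s / real N)"
    by (simp add: cscalar_prod_self[OF v] s_def)
  finally have form: "(perturbed_mixed N H t *\<^sub>v v) \<bullet>c v = complex_of_real (s / real N + t * Re q)"
    using q(1) by (simp add: complex_eq_iff)
  show "(perturbed_mixed N H t *\<^sub>v v) \<bullet>c v \<in> \<real>" unfolding form by simp
  have "- (C * s) \<le> Re q" using q(2) abs_Re_le_cmod[of q] by linarith
  then have "t * (- (C * s)) \<le> t * Re q" using t(1) by (intro mult_left_mono)
  moreover have "t * C * s \<le> s / real N" using t(2) s0 unfolding C_def
    by (metis divide_inverse mult.commute mult_1 mult_right_mono)
  ultimately show "0 \<le> Re ((perturbed_mixed N H t *\<^sub>v v) \<bullet>c v)" unfolding form by simp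
next
  have Hc: "H \<in> carrier_mat N N" using H hermitian_op_carrier by auto
  have "mtrace (perturbed_mixed N H t) = (\<Sum>i<N. 1 / of_nat N) + complex_of_real t * mtrace H"
    unfolding mtrace_def perturbed_mixed_def using Hc by (simp add: sum.distrib sum_distrib_left)
  then show "mtrace (perturbed_mixed N H t) = 1" using N tr by simp
qed

section \<open>Counting real-independent complex functions\<close>

definition real_scale_fun :: "real \<Rightarrow> ('z \<Rightarrow> complex) \<Rightarrow> 'z \<Rightarrow> complex" where
  "real_scale_fun r f = (\<lambda>z. complex_of_real r * f z)"

interpretation complex_fun: vector_space real_scale_fun
  by unfold_locales (auto simp: real_scale_fun_def fun_eq_iff algebra_simps)

lemma sum_fun_apply: "(\<Sum>i\<in>I. f i) z = (\<Sum>i\<in>I. f i z)"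
  by (induction I rule: infinite_finite_induct) auto

definition delta_fun :: "'b :: zero \<Rightarrow> 'z \<Rightarrow> 'z \<Rightarrow> 'b" where
  "delta_fun w p = (\<lambda>z. if z = p then w else 0)"

lemma span_delta_funs:
  fixes g :: "'z \<Rightarrow> complex"
  assumes R: "finite R" and supp: "\<And>z. z \<notin> R \<Longrightarrow> g z = 0"
  shows "g \<in> complex_fun.span (delta_fun 1 ` R \<union> delta_fun \<i> ` R)"
proof -
  have "g = (\<Sum>p\<in>R. real_scale_fun (Re (g p)) (delta_fun 1 p) + real_scale_fun (Im (g p)) (delta_fun \<i> p))"
  proof
    fix z
    have "(\<Sum>p\<in>R. real_scale_fun (Re (g p)) (delta_fun 1 p) + real_scale_fun (Im (g p)) (delta_fun \<i> p)) z
        = (\<Sum>p\<in>R. if z = p then complex_of_real (Re (g p)) + complex_of_real (Im (g p)) * \<i> else 0)"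
      unfolding sum_fun_apply by (rule sum.cong) (auto simp: real_scale_fun_def delta_fun_def)
    also have "\<dots> = g z" using R supp[of z] by (auto simp: complex_eq_iff)
    finally show "g z = (\<Sum>p\<in>R. real_scale_fun (Re (g p)) (delta_fun 1 p)
        + real_scale_fun (Im (g p)) (delta_fun \<i> p)) z" ..
  qed
  also have "\<dots> \<in> complex_fun.span (delta_fun 1 ` R \<union> delta_fun \<i> ` R)"
    by (intro complex_fun.span_sum complex_fun.span_add complex_fun.span_scale complex_fun.span_base)
      auto
  finally show ?thesis .
qed

context
  fixes f :: "'i \<Rightarrow> 'z \<Rightarrow> complex" and I :: "'i set"
  assumes indep: "\<And>c. (\<And>z. (\<Sum>i\<in>I. complex_of_real (c i) * f i z) = 0) \<Longrightarrow> \<forall>i\<in>I. c i = 0"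
begin

lemma inj_on_real_independent:
  assumes I: "finite I" shows "inj_on f I"
proof (rule inj_onI, rule ccontr)
  fix i j assume i: "i \<in> I" and j: "j \<in> I" and eq: "f i = f j" and ij: "i \<noteq> j"
  define c where "c = (\<lambda>k. if k = i then 1 else if k = j then - 1 else (0 :: real))"
  have "(\<Sum>k\<in>I. complex_of_real (c k) * f k z) = 0" for z
  proof -
    have "(\<Sum>k\<in>I. complex_of_real (c k) * f k z)
        = (\<Sum>k\<in>I. (if k = i then f i z else 0) - (if k = j then f j z else 0))"
      by (rule sum.cong) (auto simp: c_def ij)
    also have "\<dots> = f i z - f j z" using I i j by (simp add: sum_subtractf)
    finally show ?thesis using eq by simp
  qed
  then have "\<forall>k\<in>I. c k = 0" by (rule indep)
  then have "c i = 0" using i by blast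
  then show False by (simp add: c_def)
qed

lemma complex_fun_independent_image:
  assumes I: "finite I" shows "complex_fun.independent (f ` I)"
proof
  assume "complex_fun.dependent (f ` I)"
  then obtain u where u: "\<exists>v\<in>f ` I. u v \<noteq> 0" and s: "(\<Sum>v\<in>f ` I. real_scale_fun (u v) v) = 0"
    using complex_fun.dependent_finite[of "f ` I"] I by auto
  have "(\<Sum>i\<in>I. real_scale_fun (u (f i)) (f i)) = 0"
    using s sum.reindex[OF inj_on_real_independent[OF I], of "\<lambda>v. real_scale_fun (u v) v"] by simp
  then have "(\<Sum>i\<in>I. complex_of_real (u (f i)) * f i z) = 0" for z
    using sum_fun_apply[of "\<lambda>i. real_scale_fun (u (f i)) (f i)" I z] by (simp add: real_scale_fun_def)
  then have "\<forall>i\<in>I. u (f i) = 0" by (rule indep)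
  then show False using u by auto
qed

lemma card_le_twice_card_support:
  assumes I: "finite I" and R: "finite R" and supp: "\<And>i z. i \<in> I \<Longrightarrow> z \<notin> R \<Longrightarrow> f i z = 0"
  shows "card I \<le> 2 * card R"
proof -
  let ?T = "delta_fun 1 ` R \<union> delta_fun \<i> ` R"
  have "f ` I \<subseteq> complex_fun.span ?T"
  proof
    fix g assume "g \<in> f ` I"
    then obtain i where "i \<in> I" "g = f i" by blast
    then show "g \<in> complex_fun.span ?T" using span_delta_funs[OF R, of "f i"] supp by simp
  qed
  then have "card (f ` I) \<le> card ?T"
    using complex_fun.independent_span_bound[OF _ complex_fun_independent_image[OF I]] R by simp
  also have "\<dots> \<le> card (delta_fun (1 :: complex) ` R) + card (delta_fun \<i> ` R)"
    by (rule card_Un_le)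
  also have "\<dots> \<le> 2 * card R"
    using card_image_le[OF R, of "delta_fun (1 :: complex)"] card_image_le[OF R, of "delta_fun \<i>"]
    by linarith
  finally show ?thesis using card_image[OF inj_on_real_independent[OF I]] by simp
qed

end

text \<open>Functionals \<open>h \<mapsto> Im (\<Sum>\<^sub>z\<^sub>\<in>\<^sub>Z\<^sub>k h z)\<close> vanishing on the family \<open>f\<close>, together with
  functions \<open>g\<close> dual to them, extend an independent family by \<open>|K|\<close> members.\<close>

lemma card_add_le_twice_card_support:
  fixes f :: "'p \<Rightarrow> 'z \<Rightarrow> complex" and g :: "'k \<Rightarrow> 'z \<Rightarrow> complex" and Z :: "'k \<Rightarrow> 'z set"
  assumes P: "finite P" and K: "finite K" and R: "finite R"
    and f_supp: "\<And>p z. p \<in> P \<Longrightarrow> z \<notin> R \<Longrightarrow> f p z = 0"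
    and g_supp: "\<And>k z. k \<in> K \<Longrightarrow> z \<notin> R \<Longrightarrow> g k z = 0"
    and f_indep: "\<And>c. (\<And>z. (\<Sum>p\<in>P. complex_of_real (c p) * f p z) = 0) \<Longrightarrow> \<forall>p\<in>P. c p = 0"
    and f_annihilated: "\<And>p k. p \<in> P \<Longrightarrow> k \<in> K \<Longrightarrow> Im (\<Sum>z\<in>Z k. f p z) = 0"
    and g_dual: "\<And>k l. k \<in> K \<Longrightarrow> l \<in> K \<Longrightarrow> Im (\<Sum>z\<in>Z k. g l z) = (if l = k then 1 else 0)"
  shows "card P + card K \<le> 2 * card R"
proof -
  have "card (P <+> K) \<le> 2 * card R"
  proof (rule card_le_twice_card_support[where f = "case_sum f g"])
    show "finite (P <+> K)" using P K by simp
    show "case_sum f g i z = 0" if "i \<in> P <+> K" "z \<notin> R" for i z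
      using that f_supp g_supp by auto
    fix c :: "'p + 'k \<Rightarrow> real"
    assume "\<And>z. (\<Sum>i\<in>P <+> K. complex_of_real (c i) * case_sum f g i z) = 0"
    then have zero: "(\<Sum>p\<in>P. complex_of_real (c (Inl p)) * f p z)
        + (\<Sum>k\<in>K. complex_of_real (c (Inr k)) * g k z) = 0" for z
      using P K by (simp add: sum.Plus)
    have cK: "c (Inr k) = 0" if k: "k \<in> K" for k
    proof -
      have "0 = Im (\<Sum>z\<in>Z k. (\<Sum>p\<in>P. complex_of_real (c (Inl p)) * f p z)
          + (\<Sum>l\<in>K. complex_of_real (c (Inr l)) * g l z))"
        by (simp only: zero) simp
      also have "\<dots> = (\<Sum>p\<in>P. c (Inl p) * Im (\<Sum>z\<in>Z k. f p z))
          + (\<Sum>l\<in>K. c (Inr l) * Im (\<Sum>z\<in>Z k. g l z))"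
        by (simp add: sum.distrib Im_sum sum_distrib_left sum.swap[of _ "Z k"])
      also have "\<dots> = (\<Sum>l\<in>K. c (Inr l) * (if l = k then 1 else 0))"
        using f_annihilated[OF _ k] g_dual[OF k] by simp
      also have "\<dots> = c (Inr k)"
        by (subst sum.remove[OF K k]) (auto intro!: sum.neutral)
      finally show ?thesis ..
    qed
    then have "\<forall>p\<in>P. c (Inl p) = 0" using zero by (intro f_indep) simp
    with cK show "\<forall>i\<in>P <+> K. c i = 0" by auto
  qed (use R in simp)
  then show ?thesis using P K by (simp add: card_Plus)
qed

section \<open>A real basis of the Hermitian matrices\<close>

definition herm_basis :: "nat \<Rightarrow> nat \<times> nat \<Rightarrow> complex mat" where
  "herm_basis N p = mat N N (\<lambda>(r, s).
     if fst p < snd p then (if (r, s) = p \<or> (s, r) = p then 1 else 0)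
     else if snd p < fst p then (if (r, s) = p then \<i> else if (s, r) = p then - \<i> else 0)
     else if (r, s) = p then 1 else 0)"

definition herm_coord :: "nat \<times> nat \<Rightarrow> complex mat \<Rightarrow> real" where
  "herm_coord p M = (if snd p < fst p then Im (M $$ p) else Re (M $$ p))"

definition herm_lincomb :: "nat \<Rightarrow> (nat \<times> nat \<Rightarrow> real) \<Rightarrow> complex mat" where
  "herm_lincomb N c = mat N N (\<lambda>rs. \<Sum>q\<in>{..<N} \<times> {..<N}. complex_of_real (c q) * herm_basis N q $$ rs)"

lemma herm_basis_carrier: "herm_basis N p \<in> carrier_mat N N"
  unfolding herm_basis_def by simp

lemma hermitian_herm_basis: "hermitian_op N (herm_basis N p)"
proof (rule hermitian_opI[OF herm_basis_carrier])
  fix i j assume "i < N" "j < N"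
  obtain a b where p: "p = (a, b)" by (cases p)
  consider "a < b" | "b < a" | "a = b" by linarith
  then show "herm_basis N p $$ (i, j) = cnj (herm_basis N p $$ (j, i))"
    by cases (use \<open>i < N\<close> \<open>j < N\<close> in \<open>auto simp: herm_basis_def p\<close>)
qed

lemma herm_coord_herm_basis:
  assumes "p \<in> {..<N} \<times> {..<N}" "q \<in> {..<N} \<times> {..<N}"
  shows "herm_coord p (herm_basis N q) = (if p = q then 1 else 0)"
proof -
  obtain j k m l where p: "p = (j, k)" and q: "q = (m, l)" by (cases p, cases q)
  have jk: "j < N" "k < N" using assms(1) p by auto
  show ?thesis
  proof (cases "p = q")
    case True
    consider "k < j" | "j < k" | "j = k" by linarith
    then show ?thesis by cases (use True jk in \<open>auto simp: herm_coord_def herm_basis_def p q\<close>)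
  next
    case False
    consider "m < l" | "l < m" | "m = l" by linarith
    then show ?thesis by cases (use False jk in \<open>auto simp: herm_coord_def herm_basis_def p q\<close>)
  qed
qed

lemma hermitian_herm_lincomb: "hermitian_op N (herm_lincomb N c)"
proof (rule hermitian_opI)
  show "herm_lincomb N c \<in> carrier_mat N N" unfolding herm_lincomb_def by simp
  fix i j assume "i < N" "j < N"
  then show "herm_lincomb N c $$ (i, j) = cnj (herm_lincomb N c $$ (j, i))"
    unfolding herm_lincomb_def
    by (auto simp: cnj_sum hermitian_op_cnj[OF hermitian_herm_basis] intro!: sum.cong)
qed

lemma herm_coord_herm_lincomb:
  assumes p: "p \<in> {..<N} \<times> {..<N}"
  shows "herm_coord p (herm_lincomb N c) = c p"
proof -
  have "herm_lincomb N c $$ p = (\<Sum>q\<in>{..<N} \<times> {..<N}. complex_of_real (c q) * herm_basis N q $$ p)"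
    using p by (auto simp: herm_lincomb_def)
  then have "herm_coord p (herm_lincomb N c) = (\<Sum>q\<in>{..<N} \<times> {..<N}. c q * herm_coord p (herm_basis N q))"
    by (simp add: herm_coord_def Im_sum Re_sum)
  also have "\<dots> = (\<Sum>q\<in>{..<N} \<times> {..<N}. if q = p then c q else 0)"
    by (intro sum.cong refl) (auto simp: herm_coord_herm_basis[OF p])
  also have "\<dots> = c p" using p by simp
  finally show ?thesis .
qed

section \<open>Marginals and injectivity of the Kirkwood--Dirac distribution\<close>

locale hermitian_pair = A: hermitian_matrix N A + B: hermitian_matrix N B for N A B
begin

lemma KD_apply:
  "KD N A B H (x, y) = mtrace (eig_proj N A (complex_of_real x) * eig_proj N B (complex_of_real y) * H)"
  by (simp add: KD_def)

lemma KD_outside_spectra: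
  assumes "(x, y) \<notin> real_eigenvalues A \<times> real_eigenvalues B" "H \<in> carrier_mat N N"
  shows "KD N A B H (x, y) = 0"
proof -
  have "eig_proj N A (complex_of_real x) * eig_proj N B (complex_of_real y) = 0\<^sub>m N N"
    using assms(1) A.eig_proj_not_real_eigenvalue B.eig_proj_not_real_eigenvalue
    by (auto simp: left_mult_zero_mat[OF B.eig_proj_carrier] right_mult_zero_mat[OF A.eig_proj_carrier])
  then show ?thesis using assms(2) by (simp add: KD_apply mtrace_def)
qed

lemma sum_KD_row:
  assumes H: "H \<in> carrier_mat N N"
  shows "(\<Sum>y\<in>real_eigenvalues B. KD N A B H (x, y)) = mtrace (eig_proj N A (complex_of_real x) * H)"
  unfolding KD_apply
  by (rule sum_mtrace_mult_resolution[OF B.eig_proj_carrier B.sum_eig_proj_real_eigenvalues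
        A.eig_proj_carrier H])

lemma sum_mtrace_eig_proj_mult:
  assumes H: "H \<in> carrier_mat N N"
  shows "(\<Sum>x\<in>real_eigenvalues A. mtrace (eig_proj N A (complex_of_real x) * H)) = mtrace H"
proof -
  have "(\<Sum>x\<in>real_eigenvalues A. mtrace (1\<^sub>m N * eig_proj N A (complex_of_real x) * H)) = mtrace (1\<^sub>m N * H)"
    by (rule sum_mtrace_mult_resolution[OF A.eig_proj_carrier A.sum_eig_proj_real_eigenvalues
          one_carrier_mat H])
  then show ?thesis by (simp add: left_mult_one_mat[OF A.eig_proj_carrier] left_mult_one_mat[OF H])
qed

lemma sum_KD_column:
  assumes H: "H \<in> carrier_mat N N"
  shows "(\<Sum>x\<in>real_eigenvalues A. KD N A B H (x, y)) = mtrace (eig_proj N B (complex_of_real y) * H)"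
proof -
  have "KD N A B H (x, y)
      = mtrace (eig_proj N A (complex_of_real x) * (eig_proj N B (complex_of_real y) * H))" for x
    unfolding KD_apply by (simp add: assoc_mult_mat[OF A.eig_proj_carrier B.eig_proj_carrier H])
  then show ?thesis using sum_mtrace_eig_proj_mult[OF mult_carrier_mat[OF B.eig_proj_carrier H]] by simp
qed

lemma sum_KD:
  "H \<in> carrier_mat N N \<Longrightarrow> (\<Sum>x\<in>real_eigenvalues A. \<Sum>y\<in>real_eigenvalues B. KD N A B H (x, y)) = mtrace H"
  by (simp add: sum_KD_row sum_mtrace_eig_proj_mult)

lemma KD_herm_lincomb:
  "KD N A B (herm_lincomb N c) z
    = (\<Sum>q\<in>{..<N} \<times> {..<N}. complex_of_real (c q) * KD N A B (herm_basis N q) z)"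
proof -
  obtain x y where z: "z = (x, y)" by (cases z)
  have X: "eig_proj N A (complex_of_real x) * eig_proj N B (complex_of_real y) \<in> carrier_mat N N"
    by (rule mult_carrier_mat[OF A.eig_proj_carrier B.eig_proj_carrier])
  show ?thesis
    unfolding z KD_apply herm_lincomb_def
    by (rule mtrace_mult_lincomb[where M = "herm_basis N", OF X herm_basis_carrier])
qed

lemma hermitian_eq_0_if_KD_eq_0:
  assumes N: "0 < N"
    and inj: "\<forall>\<rho> \<sigma>. density_op N \<rho> \<longrightarrow> density_op N \<sigma> \<longrightarrow> KD N A B \<rho> = KD N A B \<sigma> \<longrightarrow> \<rho> = \<sigma>"
    and H: "hermitian_op N H" and zero: "\<And>z. KD N A B H z = 0"
  shows "H = 0\<^sub>m N N"
proof -
  have Hc: "H \<in> carrier_mat N N" using H hermitian_op_carrier by auto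
  have tr: "mtrace H = 0" using sum_KD[OF Hc] zero by simp
  define C where "C = (\<Sum>i<N. \<Sum>j<N. cmod (H $$ (i, j)))"
  define t where "t = 1 / (real N * (C + 1))"
  have C: "0 \<le> C" unfolding C_def by (auto intro!: sum_nonneg)
  then have t: "0 < t" unfolding t_def using N by auto
  have "t * C \<le> t * (C + 1)" using t by simp
  also have "\<dots> = 1 / real N" unfolding t_def using C by simp
  finally have small: "t * C \<le> 1 / real N" .
  have "density_op N (perturbed_mixed N H t)"
    by (rule density_op_perturbed_mixed[OF N H tr]) (use t small in \<open>simp_all add: C_def\<close>)
  moreover have "density_op N (perturbed_mixed N H 0)"
    by (rule density_op_perturbed_mixed[OF N H tr]) simp_all
  moreover have "KD N A B (perturbed_mixed N H t) = KD N A B (perturbed_mixed N H 0)"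
  proof
    fix z :: "real \<times> real"
    obtain x y where z: "z = (x, y)" by (cases z)
    have X: "eig_proj N A (complex_of_real x) * eig_proj N B (complex_of_real y) \<in> carrier_mat N N"
      by (rule mult_carrier_mat[OF A.eig_proj_carrier B.eig_proj_carrier])
    show "KD N A B (perturbed_mixed N H t) z = KD N A B (perturbed_mixed N H 0) z"
      using zero[of z] unfolding z KD_apply mtrace_mult_perturbed_mixed[OF X Hc, of t] by simp
  qed
  ultimately have eq: "perturbed_mixed N H t = perturbed_mixed N H 0" using inj by blast
  show ?thesis
  proof (rule eq_matI)
    fix i j assume "i < dim_row (0\<^sub>m N N :: complex mat)" "j < dim_col (0\<^sub>m N N :: complex mat)"
    then have "i < N" "j < N" by auto
    then have "complex_of_real t * H $$ (i, j) = 0"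
      using arg_cong[OF eq, of "\<lambda>M. M $$ (i, j)"] by (simp add: perturbed_mixed_def)
    then show "H $$ (i, j) = 0\<^sub>m N N $$ (i, j)" using t \<open>i < N\<close> \<open>j < N\<close> by simp
  qed (use Hc in auto)
qed

lemma KD_herm_basis_independent:
  assumes N: "0 < N"
    and inj: "\<forall>\<rho> \<sigma>. density_op N \<rho> \<longrightarrow> density_op N \<sigma> \<longrightarrow> KD N A B \<rho> = KD N A B \<sigma> \<longrightarrow> \<rho> = \<sigma>"
    and zero: "\<And>z. (\<Sum>p\<in>{..<N} \<times> {..<N}. complex_of_real (c p) * KD N A B (herm_basis N p) z) = 0"
  shows "\<forall>p\<in>{..<N} \<times> {..<N}. c p = 0"
proof
  fix p assume p: "p \<in> {..<N} \<times> {..<N}"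
  have "herm_lincomb N c = 0\<^sub>m N N"
    by (rule hermitian_eq_0_if_KD_eq_0[OF N inj hermitian_herm_lincomb]) (simp add: KD_herm_lincomb zero)
  then have "c p = herm_coord p (0\<^sub>m N N)" using herm_coord_herm_lincomb[OF p, of c] by simp
  also have "\<dots> = 0" using p by (auto simp: herm_coord_def)
  finally show "c p = 0" .
qed

end

lemma num_eigenvalues_dim_0:
  assumes "A \<in> carrier_mat 0 0" shows "num_eigenvalues A = 0"
proof -
  have "\<not> eigenvalue A x" for x
  proof
    assume "eigenvalue A x"
    then obtain v :: "complex vec" where "v \<in> carrier_vec 0" "v \<noteq> 0\<^sub>v 0"
      using assms unfolding eigenvalue_def eigenvector_def by auto
    then show False by (metis carrier_vecD eq_vecI index_zero_vec(2) less_nat_zero_code)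
  qed
  then have "{x. eigenvalue A x} = {}" by blast
  then show ?thesis unfolding num_eigenvalues_def by (simp only: card.empty)
qed

lemma sum_singleton_times: "(\<Sum>z\<in>{a} \<times> B. h z) = (\<Sum>b\<in>B. h (a, b))"
proof -
  have "{a} \<times> B = Pair a ` B" by auto
  then show ?thesis by (simp add: sum.reindex inj_on_def)
qed

lemma sum_times_singleton: "(\<Sum>z\<in>A \<times> {b}. h z) = (\<Sum>a\<in>A. h (a, b))"
proof -
  have "A \<times> {b} = (\<lambda>a. (a, b)) ` A" by auto
  then show ?thesis by (simp add: sum.reindex inj_on_def)
qed

definition marginal_cells :: "'a set \<Rightarrow> 'b set \<Rightarrow> 'a + 'b \<Rightarrow> ('a \<times> 'b) set" where
  "marginal_cells X Y = case_sum (\<lambda>a. {a} \<times> Y) (\<lambda>b. X \<times> {b})"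

text \<open>Witnesses dual to the row marginals and to the column marginals other than that of \<open>b\<^sub>0\<close>.\<close>

definition marginal_dual :: "'a \<Rightarrow> 'b \<Rightarrow> 'a + 'b \<Rightarrow> 'a \<times> 'b \<Rightarrow> complex" where
  "marginal_dual a0 b0 = case_sum (\<lambda>a z. if z = (a, b0) then \<i> else 0)
     (\<lambda>b z. (if z = (a0, b) then \<i> else 0) - (if z = (a0, b0) then \<i> else 0))"

lemma marginal_dual_outside:
  assumes "a0 \<in> X" "b0 \<in> Y" "k \<in> X <+> Y" "z \<notin> X \<times> Y"
  shows "marginal_dual a0 b0 k z = 0"
proof -
  have "z \<noteq> (a, b)" if "a \<in> X" "b \<in> Y" for a b using that assms(4) by auto
  then show ?thesis using assms(1-3) by (auto simp: marginal_dual_def)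
qed

lemma Im_sum_marginal_dual:
  assumes "finite X" "finite Y" "a0 \<in> X" "b0 \<in> Y" "k \<in> X <+> (Y - {b0})" "l \<in> X <+> (Y - {b0})"
  shows "Im (\<Sum>z\<in>marginal_cells X Y k. marginal_dual a0 b0 l z) = (if l = k then 1 else 0)"
  using assms
  by (auto simp: marginal_cells_def marginal_dual_def sum_subtractf simp del: Im_sum split: if_split_asm)

context hermitian_pair
begin

lemma Im_sum_marginal_KD:
  assumes H: "hermitian_op N H" and k: "k \<in> real_eigenvalues A <+> real_eigenvalues B"
  shows "Im (\<Sum>z\<in>marginal_cells (real_eigenvalues A) (real_eigenvalues B) k. KD N A B H z) = 0"
proof -
  have Hc: "H \<in> carrier_mat N N" using H hermitian_op_carrier by auto
  have "(\<Sum>z\<in>marginal_cells (real_eigenvalues A) (real_eigenvalues B) k. KD N A B H z)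
      = (case k of Inl a \<Rightarrow> mtrace (eig_proj N A (complex_of_real a) * H)
           | Inr b \<Rightarrow> mtrace (eig_proj N B (complex_of_real b) * H))"
    by (cases k) (simp_all add: marginal_cells_def sum_singleton_times sum_times_singleton
        sum_KD_row[OF Hc] sum_KD_column[OF Hc])
  then show ?thesis
    using mtrace_mult_hermitian_real[OF A.hermitian_eig_proj H]
      mtrace_mult_hermitian_real[OF B.hermitian_eig_proj H]
    by (cases k) simp_all
qed

lemma square_add_num_eigenvalues_le:
  assumes N: "0 < N"
    and inj: "\<forall>\<rho> \<sigma>. density_op N \<rho> \<longrightarrow> density_op N \<sigma> \<longrightarrow> KD N A B \<rho> = KD N A B \<sigma> \<longrightarrow> \<rho> = \<sigma>"
  shows "N * N + num_eigenvalues A + num_eigenvalues B \<le> 2 * (num_eigenvalues A * num_eigenvalues B) + 1"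
proof -
  let ?RA = "real_eigenvalues A" and ?RB = "real_eigenvalues B"
  have fin: "finite ?RA" "finite ?RB"
    using A.finite_real_eigenvalues B.finite_real_eigenvalues by auto
  obtain a0 b0 where a0: "a0 \<in> ?RA" and b0: "b0 \<in> ?RB"
    using A.real_eigenvalues_nonempty[OF N] B.real_eigenvalues_nonempty[OF N] by blast
  have "card ({..<N} \<times> {..<N}) + card (?RA <+> (?RB - {b0})) \<le> 2 * card (?RA \<times> ?RB)"
  proof (rule card_add_le_twice_card_support[where f = "\<lambda>p. KD N A B (herm_basis N p)"
        and g = "marginal_dual a0 b0" and Z = "marginal_cells ?RA ?RB"])
    show "KD N A B (herm_basis N p) z = 0" if "z \<notin> ?RA \<times> ?RB" for p z
      using KD_outside_spectra[of "fst z" "snd z", OF _ herm_basis_carrier] that by simp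
    show "\<forall>p\<in>{..<N} \<times> {..<N}. c p = 0"
      if "\<And>z. (\<Sum>p\<in>{..<N} \<times> {..<N}. complex_of_real (c p) * KD N A B (herm_basis N p) z) = 0" for c
      using KD_herm_basis_independent[OF N inj that] .
    show "marginal_dual a0 b0 k z = 0" if "k \<in> ?RA <+> (?RB - {b0})" "z \<notin> ?RA \<times> ?RB" for k z
      by (rule marginal_dual_outside[OF a0 b0 _ that(2)]) (use that(1) in auto)
    show "Im (\<Sum>z\<in>marginal_cells ?RA ?RB k. KD N A B (herm_basis N p) z) = 0"
      if "k \<in> ?RA <+> (?RB - {b0})" for p k
      by (rule Im_sum_marginal_KD[OF hermitian_herm_basis]) (use that in auto)
    show "Im (\<Sum>z\<in>marginal_cells ?RA ?RB k. marginal_dual a0 b0 l z) = (if l = k then 1 else 0)"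
      if "k \<in> ?RA <+> (?RB - {b0})" "l \<in> ?RA <+> (?RB - {b0})" for k l
      by (rule Im_sum_marginal_dual[OF fin a0 b0 that])
  qed (use fin in auto)
  moreover have "card (?RA <+> (?RB - {b0})) + 1 = card ?RA + card ?RB"
    using b0 fin card_gt_0_iff[of ?RB] by (auto simp: card_Plus)
  ultimately show ?thesis
    using A.card_real_eigenvalues B.card_real_eigenvalues by (simp add: card_cartesian_product)
qed

end

theorem proposition11:
  fixes N :: nat and A B :: "complex mat"
  assumes "hermitian_op N A" and "hermitian_op N B"
    and "\<forall>\<rho> \<sigma>. density_op N \<rho> \<longrightarrow> density_op N \<sigma> \<longrightarrow> KD N A B \<rho> = KD N A B \<sigma> \<longrightarrow> \<rho> = \<sigma>"
  shows "2 * int N ^ 2 - 1 \<le> (2 * int (num_eigenvalues A) - 1) * (2 * int (num_eigenvalues B) - 1)"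
proof (cases "N = 0")
  case True
  then show ?thesis
    using num_eigenvalues_dim_0 hermitian_op_carrier assms(1,2) by fastforce
next
  case False
  interpret hermitian_pair N A B by unfold_locales fact+
  have "int (N * N + num_eigenvalues A + num_eigenvalues B)
      \<le> int (2 * (num_eigenvalues A * num_eigenvalues B) + 1)"
    using square_add_num_eigenvalues_le[OF _ assms(3)] False by (simp only: of_nat_le_iff)
  then show ?thesis by (simp add: power2_eq_square algebra_simps)
qed

end
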